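(* As formal power series in $q$ with coefficients Laurent polynomials in $z$, \[ (1-z)(1-z^{-1})\,\overline{S}_1(z,q)=\sum_{n=0}^\infty\sum_{m=-\infty}^\infty\frac{\overline{N}(m,n)}{2}z^mq^n-\frac{(-q;q)_\infty}{(q;q)_\infty}\Bigl(\frac12+\sum_{n=1}^\infty\frac{(1-z)(1-z^{-1})(-1)^nq^n}{(1-zq^n)(1-z^{-1}q^n)}\Bigr). \]
   Context: Notation: $(a;q)_\infty=\prod_{k\ge0}(1-aq^k)$, $(a;q)_n=(a;q)_\infty/(aq^n;q)_\infty$. Define \[ \overline{S}_1(z,q)=\sum_{n=0}^\infty\frac{q^{2n+1}(-q^{2n+2};q)_\infty(q^{2n+2};q)_\infty}{(zq^{2n+1};q)_\infty(z^{-1}q^{2n+1};q)_\infty}. \] $\overline{N}(m,n)$ (number of overpartitions of $n$ with Dyson rank $m$) is defined by \[ \sum_{n\ge0}\sum_{m}\overline{N}(m,n)z^mq^n=\sum_{n=0}^\infty\frac{(-1;q)_n\,q^{n(n+1)/2}}{(zq;q)_n(z^{-1}q;q)_n}. \] *)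

theory Defs
  imports "HOL-Analysis.Analysis" "HOL-Computational_Algebra.Formal_Power_Series"
          "HOL-Computational_Algebra.Formal_Laurent_Series"
begin

text \<open>Formal power series in q whose coefficients are formal Laurent series in z
  (over the rationals); the Laurent polynomials in z embed into these.
  Infinite sums and products are taken in the standard (q-adic) topology on fps.\<close>

type_synonym qz = "rat fls fps"

definition zz :: qz where "zz = fps_const fls_X"
definition zinv :: qz where "zinv = fps_const fls_X_inv"
definition qq :: qz where "qq = fps_X"

definition qpoch_inf :: "qz \<Rightarrow> qz" where
  "qpoch_inf a = (\<Prod>k. 1 - a * qq ^ k)"
definition qpoch :: "qz \<Rightarrow> nat \<Rightarrow> qz" where
  "qpoch a n = (\<Prod>k<n. 1 - a * qq ^ k)"

definition S1bar :: qz where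
  "S1bar = (\<Sum>n. qq ^ (2*n+1) * qpoch_inf (- (qq ^ (2*n+2))) * qpoch_inf (qq ^ (2*n+2))
               / (qpoch_inf (zz * qq ^ (2*n+1)) * qpoch_inf (zinv * qq ^ (2*n+1))))"

definition overpart_rank_gf :: qz where
  "overpart_rank_gf = (\<Sum>n. qpoch (-1) n * qq ^ (n*(n+1) div 2)
                          / (qpoch (zz * qq) n * qpoch (zinv * qq) n))"

definition Nbar :: "int \<Rightarrow> nat \<Rightarrow> rat" where
  "Nbar m n = fls_nth (fps_nth overpart_rank_gf n) m"

end

theory Submission
  imports Defs
begin

text \<open>
  All series involved are limits of sums over Bailey pairs relative to \<open>a = 1\<close>. The Bailey lemma
  with parameters \<open>z, z\<^sup>-\<^sup>1\<close> and the one with parameter \<open>-1\<close> commute on the unit Bailey pair, since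
  \<open>\<beta>\<close> is determined by \<open>\<alpha>\<close>; letting \<open>N \<rightarrow> \<infinity>\<close> in the resulting finite identity expresses the
  rank generating function of overpartitions as \<open>\<Phi> \<Sum>\<^sub>j (z)\<^sub>j (z\<^sup>-\<^sup>1)\<^sub>j q\<^sup>j / ((q)\<^sub>j (-q)\<^sub>j)\<close> with
  \<open>\<Phi> = (-q)\<^sub>\<infinity> (q)\<^sub>\<infinity> / ((zq)\<^sub>\<infinity> (z\<^sup>-\<^sup>1q)\<^sub>\<infinity>)\<close>. The \<open>z\<close>-Bailey lemma applied to the pair behind
  Gauss's identity \<open>\<Sum>\<^sub>k [2n, k]\<^sub>q (-1)\<^sup>k = (q; q\<^sup>2)\<^sub>n\<close> turns the same series with an extra sign
  \<open>(-1)\<^sup>j\<close> into \<open>(-q)\<^sub>\<infinity> / (q)\<^sub>\<infinity>\<close> times a Lambert-type series. Finally \<open>(1 - z)(1 - z\<^sup>-\<^sup>1) S1bar\<close> is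
  \<open>\<Phi>\<close> times the odd-indexed part of the first series, i.e. half the difference of the two.
  Infinite sums and products are compared coefficientwise with finite truncations.
\<close>

section \<open>Agreement of power series up to a given degree\<close>

definition fps_vanishes_below :: "nat \<Rightarrow> 'a::zero fps \<Rightarrow> bool" where
  "fps_vanishes_below k f \<longleftrightarrow> (\<forall>i<k. f $ i = 0)"

definition fps_eq_upto :: "nat \<Rightarrow> 'a fps \<Rightarrow> 'a fps \<Rightarrow> bool" where
  "fps_eq_upto n f g \<longleftrightarrow> (\<forall>i\<le>n. f $ i = g $ i)"

lemma fps_eq_upto_refl [simp]: "fps_eq_upto n f f"
  by (simp add: fps_eq_upto_def)

lemma fps_eq_upto_sym: "fps_eq_upto n f g \<Longrightarrow> fps_eq_upto n g f"
  by (simp add: fps_eq_upto_def)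

lemma fps_eq_upto_trans [trans]: "fps_eq_upto n f g \<Longrightarrow> fps_eq_upto n g h \<Longrightarrow> fps_eq_upto n f h"
  by (simp add: fps_eq_upto_def)

lemma fps_eqI_eq_upto: "(\<And>n. fps_eq_upto n f g) \<Longrightarrow> f = g"
  unfolding fps_eq_iff fps_eq_upto_def by blast

lemma fps_eq_upto_iff_vanishes_below:
  fixes f g :: "'a::group_add fps"
  shows "fps_eq_upto n f g \<longleftrightarrow> fps_vanishes_below (Suc n) (f - g)"
  by (auto simp: fps_eq_upto_def fps_vanishes_below_def)

lemma fps_vanishes_below_mono: "fps_vanishes_below k f \<Longrightarrow> j \<le> k \<Longrightarrow> fps_vanishes_below j f"
  by (auto simp: fps_vanishes_below_def)

lemma fps_vanishes_below_mult:
  fixes f g :: "'a::comm_semiring_0 fps"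
  assumes f: "fps_vanishes_below a f" and g: "fps_vanishes_below b g"
  shows "fps_vanishes_below (a + b) (f * g)"
  unfolding fps_vanishes_below_def fps_mult_nth
proof (intro allI impI sum.neutral ballI)
  fix i j assume "i < a + b" "j \<in> {0..i}"
  then have "j < a \<or> i - j < b" by auto
  then show "f $ j * g $ (i - j) = 0" using f g by (auto simp: fps_vanishes_below_def)
qed

lemma fps_vanishes_below_mult_left:
  fixes f g :: "'a::comm_semiring_0 fps"
  shows "fps_vanishes_below k g \<Longrightarrow> fps_vanishes_below k (f * g)"
  using fps_vanishes_below_mult[of 0 f k g] by (simp add: fps_vanishes_below_def)

lemma fps_vanishes_below_X_power_mult: "fps_vanishes_below k (fps_X ^ k * f)"
  by (simp add: fps_vanishes_below_def fps_X_power_mult_nth)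

lemma fps_eq_upto_add: "fps_eq_upto n f f' \<Longrightarrow> fps_eq_upto n g g' \<Longrightarrow> fps_eq_upto n (f + g) (f' + g')"
  by (simp add: fps_eq_upto_def)

lemma fps_eq_upto_diff: "fps_eq_upto n f f' \<Longrightarrow> fps_eq_upto n g g' \<Longrightarrow> fps_eq_upto n (f - g) (f' - g')"
  by (simp add: fps_eq_upto_def)

lemma fps_eq_upto_mult: "fps_eq_upto n f f' \<Longrightarrow> fps_eq_upto n g g' \<Longrightarrow> fps_eq_upto n (f * g) (f' * g')"
  by (simp add: fps_eq_upto_def fps_mult_nth)

lemma fps_eq_upto_sum:
  "(\<And>x. x \<in> A \<Longrightarrow> fps_eq_upto n (f x) (g x)) \<Longrightarrow> fps_eq_upto n (sum f A) (sum g A)"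
  by (simp add: fps_eq_upto_def fps_sum_nth)

lemma fps_eq_upto_mult_vanishing:
  fixes f g g' :: "'a::comm_ring fps"
  shows "fps_vanishes_below (Suc n) f \<Longrightarrow> fps_eq_upto n (f * g) (f * g')"
  using fps_vanishes_below_mult[of "Suc n" f 0 "g - g'"]
  by (simp add: fps_eq_upto_iff_vanishes_below fps_vanishes_below_def right_diff_distrib)

lemma fps_eq_upto_inverse:
  fixes f g :: "'a::field fps"
  assumes fg: "fps_eq_upto n f g" and f0: "f $ 0 \<noteq> 0"
  shows "fps_eq_upto n (inverse f) (inverse g)"
proof -
  have g0: "g $ 0 \<noteq> 0" using fg f0 by (simp add: fps_eq_upto_def)
  have "inverse f - inverse g = inverse f * inverse g * (g - f)"
    using f0 g0 by (simp add: algebra_simps inverse_mult_eq_1 inverse_mult_eq_1')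
  moreover have "fps_vanishes_below (Suc n) (g - f)"
    using fps_eq_upto_sym[OF fg] by (simp add: fps_eq_upto_iff_vanishes_below)
  ultimately show ?thesis
    by (simp add: fps_eq_upto_iff_vanishes_below fps_vanishes_below_mult_left)
qed

lemma tendsto_fps_stabilizing:
  fixes F :: "nat \<Rightarrow> 'a::group_add fps"
  assumes step: "\<And>n m. n \<le> m \<Longrightarrow> fps_eq_upto n (F m) (F (Suc m))"
  obtains L where "F \<longlonglongrightarrow> L" and "\<And>n m. n \<le> m \<Longrightarrow> fps_eq_upto n L (F m)"
proof
  have stable: "fps_eq_upto n (F m) (F m')" if "n \<le> m" "m \<le> m'" for n m m'
    using that(2)
  proof (induction m' rule: dec_induct)
    case (step m')
    with that(1) show ?case by (meson assms fps_eq_upto_trans le_trans)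
  qed simp
  define L where "L = Abs_fps (\<lambda>i. F i $ i)"
  show "F \<longlonglongrightarrow> L"
  proof (rule tendsto_fpsI)
    fix i
    show "eventually (\<lambda>m. F m $ i = L $ i) sequentially"
      using stable[of i i] by (intro eventually_sequentiallyI[of i]) (simp add: fps_eq_upto_def L_def)
  qed
  show "fps_eq_upto n L (F m)" if "n \<le> m" for n m
    unfolding fps_eq_upto_def
  proof (intro allI impI)
    fix i assume "i \<le> n"
    then show "L $ i = F m $ i"
      using stable[of i i m] that by (simp add: fps_eq_upto_def L_def)
  qed
qed

lemma suminf_fps_eq_upto:
  fixes f :: "nat \<Rightarrow> 'a::comm_ring_1 fps"
  assumes f: "\<And>k. fps_vanishes_below k (f k)" and "n \<le> m"
  shows "fps_eq_upto n (suminf f) (\<Sum>k\<le>m. f k)"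
proof -
  have step: "fps_eq_upto n (\<Sum>k\<le>m. f k) (\<Sum>k\<le>Suc m. f k)" if "n \<le> m" for n m
  proof -
    have "fps_vanishes_below (Suc n) (f (Suc m))"
      using f[of "Suc m"] that by (auto intro: fps_vanishes_below_mono)
    then show ?thesis
      by (simp add: fps_eq_upto_iff_vanishes_below fps_vanishes_below_def)
  qed
  obtain L where L: "(\<lambda>m. \<Sum>k\<le>m. f k) \<longlonglongrightarrow> L"
      "\<And>n m. n \<le> m \<Longrightarrow> fps_eq_upto n L (\<Sum>k\<le>m. f k)"
    using tendsto_fps_stabilizing[where F = "\<lambda>m. \<Sum>k\<le>m. f k", OF step] by blast
  have "suminf f = L"
    using L(1) by (intro sums_unique[symmetric]) (simp add: sums_def_le)
  with L(2) \<open>n \<le> m\<close> show ?thesis by simp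
qed

lemma prodinf_fps_eq_upto:
  fixes u :: "nat \<Rightarrow> 'a::idom fps"
  assumes u: "\<And>k. fps_vanishes_below (Suc k) (u k)" and "n \<le> m"
  shows "fps_eq_upto n (\<Prod>k. 1 - u k) (\<Prod>k<m. 1 - u k)"
proof -
  have step: "fps_eq_upto n (\<Prod>k<m. 1 - u k) (\<Prod>k<Suc m. 1 - u k)" if "n \<le> m" for n m
  proof -
    have "fps_vanishes_below (Suc n) ((\<Prod>k<m. 1 - u k) * u m)"
      using u[of m] that by (intro fps_vanishes_below_mult_left) (auto intro: fps_vanishes_below_mono)
    then show ?thesis by (simp add: fps_eq_upto_iff_vanishes_below algebra_simps)
  qed
  obtain L where L: "(\<lambda>m. \<Prod>k<m. 1 - u k) \<longlonglongrightarrow> L"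
      "\<And>n m. n \<le> m \<Longrightarrow> fps_eq_upto n L (\<Prod>k<m. 1 - u k)"
    using tendsto_fps_stabilizing[where F = "\<lambda>m. \<Prod>k<m. 1 - u k", OF step] by blast
  have "L $ 0 = 1"
    using L(2)[of 0 0] by (simp add: fps_eq_upto_def)
  moreover have "(\<lambda>m. \<Prod>k\<le>m. 1 - u k) \<longlonglongrightarrow> L"
    using LIMSEQ_Suc[OF L(1)] by (simp only: lessThan_Suc_atMost)
  ultimately have "(\<lambda>k. 1 - u k) has_prod L"
    by (auto simp: has_prod_def raw_has_prod_def)
  then have "(\<Prod>k. 1 - u k) = L"
    by (rule has_prod_unique[symmetric])
  with L(2) \<open>n \<le> m\<close> show ?thesis by simp
qed

lemma fps_eq_upto_weighted_sum:
  fixes f g :: "nat \<Rightarrow> 'a::comm_ring_1 fps"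
  assumes f: "\<And>k. fps_vanishes_below k (f k)" and g: "\<And>k. k \<le> n \<Longrightarrow> fps_eq_upto n (g k) G"
    and "n \<le> N"
  shows "fps_eq_upto n (\<Sum>k\<le>N. f k * g k) (suminf f * G)"
proof -
  have "fps_eq_upto n (\<Sum>k\<le>N. f k * g k) (\<Sum>k\<le>N. f k * G)"
  proof (rule fps_eq_upto_sum)
    fix k
    show "fps_eq_upto n (f k * g k) (f k * G)"
    proof (cases "k \<le> n")
      case True
      then show ?thesis by (intro fps_eq_upto_mult fps_eq_upto_refl g)
    next
      case False
      then show ?thesis
        using f[of k] by (intro fps_eq_upto_mult_vanishing) (auto intro: fps_vanishes_below_mono)
    qed
  qed
  also have "(\<Sum>k\<le>N. f k * G) = (\<Sum>k\<le>N. f k) * G"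
    by (simp add: sum_distrib_right)
  also have "fps_eq_upto n \<dots> (suminf f * G)"
    using fps_eq_upto_sym[OF suminf_fps_eq_upto[OF f \<open>n \<le> N\<close>]]
    by (intro fps_eq_upto_mult fps_eq_upto_refl)
  finally show ?thesis .
qed

section \<open>Gaussian binomial coefficients\<close>

fun qbinomial :: "'a::comm_ring_1 \<Rightarrow> nat \<Rightarrow> nat \<Rightarrow> 'a" where
  "qbinomial q n 0 = 1"
| "qbinomial q 0 (Suc k) = 0"
| "qbinomial q (Suc n) (Suc k) = qbinomial q n k + q ^ Suc k * qbinomial q n (Suc k)"

definition qpochhammer :: "'a::comm_ring_1 \<Rightarrow> 'a \<Rightarrow> nat \<Rightarrow> 'a" where
  "qpochhammer q a n = (\<Prod>k<n. 1 - a * q ^ k)"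

lemma qpochhammer_0 [simp]: "qpochhammer q a 0 = 1"
  by (simp add: qpochhammer_def)

lemma qpochhammer_Suc: "qpochhammer q a (Suc n) = qpochhammer q a n * (1 - a * q ^ n)"
  by (simp add: qpochhammer_def)

lemma qpochhammer_Suc_shift: "qpochhammer q a (Suc n) = (1 - a) * qpochhammer q (a * q) n"
  unfolding qpochhammer_def prod.lessThan_Suc_shift by (simp add: mult_ac)

lemma qpochhammer_add: "qpochhammer q a (m + k) = qpochhammer q a m * qpochhammer q (a * q ^ m) k"
  by (induction k) (simp_all add: qpochhammer_Suc power_add algebra_simps)

lemma choose_two_0 [simp]: "0 choose 2 = 0"
  by (simp add: numeral_2_eq_2)

lemma choose_two_Suc [simp]: "Suc k choose 2 = (k choose 2) + k"
  by (simp add: numeral_2_eq_2)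

lemma choose_two_add: "(a + b) choose 2 = (a choose 2) + (b choose 2) + a * b"
  by (induction b) (auto simp: algebra_simps)

lemma choose_two_double: "2 * (r choose 2) + r = r * r"
  by (induction r) (auto simp: algebra_simps)

lemma qbinomial_eq_0: "n < k \<Longrightarrow> qbinomial q n k = 0"
proof (induction n arbitrary: k)
  case 0 then show ?case by (cases k) auto
next
  case (Suc n) then show ?case by (cases k) auto
qed

lemma qbinomial_same [simp]: "qbinomial q n n = 1"
  by (induction n) (auto simp: qbinomial_eq_0)

lemma qbinomial_Suc_Suc':
  "k \<le> n \<Longrightarrow> qbinomial q (Suc n) (Suc k) = q ^ (n - k) * qbinomial q n k + qbinomial q n (Suc k)"
proof (induction n arbitrary: k)
  case 0 then show ?case by simp
next
  case (Suc n)
  show ?case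
  proof (cases k)
    case 0
    then show ?thesis using Suc.IH[of 0] by (simp add: algebra_simps)
  next
    case (Suc k')
    with Suc.prems have k': "k' \<le> n" by simp
    have IH1: "qbinomial q (Suc n) (Suc k') = q ^ (n - k') * qbinomial q n k' + qbinomial q n (Suc k')"
      using Suc.IH k' by simp
    show ?thesis
    proof (cases "k' = n")
      case True
      then show ?thesis using IH1 \<open>k = Suc k'\<close> by (simp add: qbinomial_eq_0)
    next
      case False
      then obtain d where d: "n = Suc k' + d" using k' by (metis add_Suc le_eq_less_or_eq less_iff_Suc_add)
      have IH2: "qbinomial q (Suc n) (Suc (Suc k')) = q ^ d * qbinomial q n (Suc k') + qbinomial q n (Suc (Suc k'))"
        using Suc.IH[of "Suc k'"] d by simp
      have "qbinomial q (Suc (Suc n)) (Suc (Suc k')) =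
          (q ^ Suc d * qbinomial q n k' + qbinomial q n (Suc k')) +
          q ^ Suc (Suc k') * (q ^ d * qbinomial q n (Suc k') + qbinomial q n (Suc (Suc k')))"
        using IH1 IH2 d by simp
      also have "\<dots> = q ^ Suc d * (qbinomial q n k' + q ^ Suc k' * qbinomial q n (Suc k')) +
          (qbinomial q n (Suc k') + q ^ Suc (Suc k') * qbinomial q n (Suc (Suc k')))"
        by (simp add: algebra_simps)
      also have "\<dots> = q ^ Suc d * qbinomial q (Suc n) (Suc k') + qbinomial q (Suc n) (Suc (Suc k'))"
        by simp
      finally show ?thesis using \<open>k = Suc k'\<close> d by simp
    qed
  qed
qed

lemma qbinomial_sum_Suc:
  "(\<Sum>k\<le>Suc m. qbinomial q (Suc m) k * F k) =
     (\<Sum>k\<le>m. qbinomial q m k * F (Suc k)) + (\<Sum>k\<le>m. qbinomial q m k * q ^ k * F k)"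
proof -
  have "(\<Sum>k\<le>Suc m. qbinomial q (Suc m) k * F k) =
      F 0 + (\<Sum>k\<le>m. qbinomial q (Suc m) (Suc k) * F (Suc k))"
    unfolding sum.atMost_Suc_shift by simp
  also have "(\<Sum>k\<le>m. qbinomial q (Suc m) (Suc k) * F (Suc k)) =
      (\<Sum>k\<le>m. qbinomial q m k * F (Suc k)) + (\<Sum>k\<le>m. q ^ Suc k * qbinomial q m (Suc k) * F (Suc k))"
    by (simp add: algebra_simps sum.distrib)
  also have "F 0 + (\<Sum>k\<le>m. q ^ Suc k * qbinomial q m (Suc k) * F (Suc k)) =
      (\<Sum>k\<le>Suc m. qbinomial q m k * q ^ k * F k)"
    by (simp only: sum.atMost_Suc_shift[of _ m]) (simp add: algebra_simps)
  moreover have "\<dots> = (\<Sum>k\<le>m. qbinomial q m k * q ^ k * F k)"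
    by (simp add: qbinomial_eq_0)
  ultimately show ?thesis by (simp add: algebra_simps)
qed

lemma qbinomial_sum_Suc':
  "(\<Sum>k\<le>Suc m. qbinomial q (Suc m) k * F k) =
     (\<Sum>k\<le>m. qbinomial q m k * F k) + (\<Sum>k\<le>m. q ^ (m - k) * qbinomial q m k * F (Suc k))"
proof -
  have "(\<Sum>k\<le>Suc m. qbinomial q (Suc m) k * F k) =
      F 0 + (\<Sum>k\<le>m. qbinomial q (Suc m) (Suc k) * F (Suc k))"
    unfolding sum.atMost_Suc_shift by simp
  also have "(\<Sum>k\<le>m. qbinomial q (Suc m) (Suc k) * F (Suc k)) =
      (\<Sum>k\<le>m. q ^ (m - k) * qbinomial q m k * F (Suc k) + qbinomial q m (Suc k) * F (Suc k))"
    by (rule sum.cong[OF refl], subst qbinomial_Suc_Suc', auto simp: algebra_simps)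
  also have "F 0 + \<dots> = (\<Sum>k\<le>m. q ^ (m - k) * qbinomial q m k * F (Suc k)) +
      (F 0 + (\<Sum>k\<le>m. qbinomial q m (Suc k) * F (Suc k)))"
    by (simp add: sum.distrib algebra_simps)
  also have "F 0 + (\<Sum>k\<le>m. qbinomial q m (Suc k) * F (Suc k)) = (\<Sum>k\<le>Suc m. qbinomial q m k * F k)"
    by (simp only: sum.atMost_Suc_shift[of _ m]) simp
  also have "\<dots> = (\<Sum>k\<le>m. qbinomial q m k * F k)"
    by (simp add: qbinomial_eq_0)
  finally show ?thesis by (simp add: algebra_simps)
qed

lemma qbinomial_theorem_homogeneous:
  "(\<Prod>i<m. y - x * q ^ i) =
     (\<Sum>k\<le>m. qbinomial q m k * ((-1) ^ k * q ^ (k choose 2) * x ^ k * y ^ (m - k)))"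
proof (induction m arbitrary: x)
  case 0 then show ?case by simp
next
  case (Suc m)
  let ?S = "\<Sum>k\<le>m. qbinomial q m k * ((-1) ^ k * q ^ (k choose 2) * (x * q) ^ k * y ^ (m - k))"
  have "(\<Prod>i<Suc m. y - x * q ^ i) = (y - x) * (\<Prod>i<m. y - (x * q) * q ^ i)"
    unfolding prod.lessThan_Suc_shift by (simp add: mult_ac)
  also have "\<dots> = - x * ?S + y * ?S"
    by (simp only: Suc.IH) (simp add: algebra_simps)
  also have "- x * ?S = (\<Sum>k\<le>m. qbinomial q m k *
      ((-1) ^ Suc k * q ^ (Suc k choose 2) * x ^ Suc k * y ^ (Suc m - Suc k)))"
    by (simp add: sum_distrib_left power_add power_mult_distrib algebra_simps)
  also have "y * ?S = (\<Sum>k\<le>m. qbinomial q m k * q ^ k *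
      ((-1) ^ k * q ^ (k choose 2) * x ^ k * y ^ (Suc m - k)))"
    unfolding sum_distrib_left
    by (rule sum.cong) (auto simp: Suc_diff_le power_mult_distrib algebra_simps)
  also have "(\<Sum>k\<le>m. qbinomial q m k *
      ((-1) ^ Suc k * q ^ (Suc k choose 2) * x ^ Suc k * y ^ (Suc m - Suc k))) + \<dots> =
      (\<Sum>k\<le>Suc m. qbinomial q (Suc m) k * ((-1) ^ k * q ^ (k choose 2) * x ^ k * y ^ (Suc m - k)))"
    by (rule qbinomial_sum_Suc[symmetric])
  finally show ?case .
qed

lemma qpochhammer_qbinomial_expansion:
  "qpochhammer q x m = (\<Sum>k\<le>m. qbinomial q m k * ((-1) ^ k * q ^ (k choose 2) * x ^ k))"
  using qbinomial_theorem_homogeneous[where y = 1 and x = x and q = q and m = m]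
  by (simp add: qpochhammer_def)

lemma qbinomial_sum_qpochhammer:
  "(\<Sum>k\<le>N. qbinomial q N k * (qpochhammer q x k * x ^ (N - k))) = 1"
proof (induction N)
  case 0 then show ?case by simp
next
  case (Suc N)
  have "(\<Sum>k\<le>Suc N. qbinomial q (Suc N) k * (qpochhammer q x k * x ^ (Suc N - k))) =
      (\<Sum>k\<le>N. qbinomial q N k * (qpochhammer q x (Suc k) * x ^ (Suc N - Suc k))) +
      (\<Sum>k\<le>N. qbinomial q N k * q ^ k * (qpochhammer q x k * x ^ (Suc N - k)))"
    by (rule qbinomial_sum_Suc)
  also have "\<dots> = (\<Sum>k\<le>N. qbinomial q N k * (qpochhammer q x k * x ^ (N - k)))"
    unfolding sum.distrib[symmetric]
    by (rule sum.cong) (auto simp: qpochhammer_Suc Suc_diff_le algebra_simps)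
  finally show ?case using Suc.IH by simp
qed

lemma qbinomial_qpochhammer:
  "k \<le> n \<Longrightarrow> qbinomial q n k * qpochhammer q q k * qpochhammer q q (n - k) = qpochhammer q q n"
proof (induction n arbitrary: k)
  case 0 then show ?case by simp
next
  case (Suc n)
  show ?case
  proof (cases k)
    case 0 then show ?thesis by simp
  next
    case (Suc k')
    with Suc.prems have k': "k' \<le> n" by simp
    have T1: "qbinomial q n k' * qpochhammer q q (Suc k') * qpochhammer q q (n - k') =
        qpochhammer q q n * (1 - q ^ Suc k')"
      using Suc.IH[OF k'] by (simp add: qpochhammer_Suc algebra_simps)
    show ?thesis
    proof (cases "k' = n")
      case True
      then show ?thesis using T1 \<open>k = Suc k'\<close> by (simp add: qbinomial_eq_0 qpochhammer_Suc algebra_simps)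
    next
      case False
      then have k2: "Suc k' \<le> n" using k' by simp
      have T2: "q ^ Suc k' * qbinomial q n (Suc k') * qpochhammer q q (Suc k') * qpochhammer q q (n - k') =
          qpochhammer q q n * (q ^ Suc k' - q ^ Suc n)"
      proof -
        have "Suc k' + (n - k') = Suc n"
          using k' by simp
        then have pw: "q ^ Suc k' * q ^ (n - k') = q ^ Suc n"
          by (metis power_add)
        have "n - k' = Suc (n - Suc k')" using k2 by simp
        then have "q ^ Suc k' * qbinomial q n (Suc k') * qpochhammer q q (Suc k') * qpochhammer q q (n - k') =
            q ^ Suc k' * (1 - q ^ (n - k')) *
              (qbinomial q n (Suc k') * qpochhammer q q (Suc k') * qpochhammer q q (n - Suc k'))"
          by (simp add: qpochhammer_Suc algebra_simps)
        also have "\<dots> = q ^ Suc k' * (1 - q ^ (n - k')) * qpochhammer q q n"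
          using Suc.IH[OF k2] by simp
        also have "\<dots> = qpochhammer q q n * (q ^ Suc k' - q ^ Suc n)"
          using pw by (simp add: algebra_simps)
        finally show ?thesis .
      qed
      have "qbinomial q (Suc n) k * qpochhammer q q k * qpochhammer q q (Suc n - k) =
          qbinomial q n k' * qpochhammer q q (Suc k') * qpochhammer q q (n - k') +
          q ^ Suc k' * qbinomial q n (Suc k') * qpochhammer q q (Suc k') * qpochhammer q q (n - k')"
        using \<open>k = Suc k'\<close> by (simp add: algebra_simps)
      also have "\<dots> = qpochhammer q q (Suc n)"
        unfolding T1 T2 by (simp add: qpochhammer_Suc algebra_simps)
      finally show ?thesis .
    qed
  qed
qed

definition alt_qbinomial_sum :: "'a::comm_ring_1 \<Rightarrow> nat \<Rightarrow> 'a" where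
  "alt_qbinomial_sum q n = (\<Sum>k\<le>n. qbinomial q n k * (-1) ^ k)"

definition alt_qbinomial_sum_q :: "'a::comm_ring_1 \<Rightarrow> nat \<Rightarrow> 'a" where
  "alt_qbinomial_sum_q q n = (\<Sum>k\<le>n. qbinomial q n k * ((-1) ^ k * q ^ k))"

lemma alt_qbinomial_sum_Suc:
  "alt_qbinomial_sum q (Suc n) = alt_qbinomial_sum_q q n - alt_qbinomial_sum q n"
proof -
  have "alt_qbinomial_sum q (Suc n) =
      (\<Sum>k\<le>n. qbinomial q n k * (-1) ^ Suc k) + (\<Sum>k\<le>n. qbinomial q n k * q ^ k * (-1) ^ k)"
    unfolding alt_qbinomial_sum_def by (rule qbinomial_sum_Suc)
  then show ?thesis
    by (simp add: alt_qbinomial_sum_def alt_qbinomial_sum_q_def sum_negf mult_ac)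
qed

lemma alt_qbinomial_sum_q_Suc:
  "alt_qbinomial_sum_q q (Suc n) = alt_qbinomial_sum_q q n - q ^ Suc n * alt_qbinomial_sum q n"
proof -
  have "q ^ (n - k) * qbinomial q n k * ((-1) ^ Suc k * q ^ Suc k) =
      - (q ^ Suc n * (qbinomial q n k * (-1) ^ k))" if "k \<le> n" for k
  proof -
    have "n - k + Suc k = Suc n" using that by simp
    then have pw: "q ^ (n - k) * q ^ Suc k = q ^ Suc n" by (metis power_add)
    have "q ^ (n - k) * qbinomial q n k * ((-1) ^ Suc k * q ^ Suc k) =
        - ((q ^ (n - k) * q ^ Suc k) * (qbinomial q n k * (-1) ^ k))"
      by (simp add: mult_ac)
    also have "\<dots> = - (q ^ Suc n * (qbinomial q n k * (-1) ^ k))"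
      by (simp only: pw)
    finally show ?thesis .
  qed
  then have "(\<Sum>k\<le>n. q ^ (n - k) * qbinomial q n k * ((-1) ^ Suc k * q ^ Suc k)) =
      - (q ^ Suc n * alt_qbinomial_sum q n)"
    unfolding alt_qbinomial_sum_def sum_distrib_left sum_negf[symmetric] by (intro sum.cong) auto
  moreover have "alt_qbinomial_sum_q q (Suc n) = alt_qbinomial_sum_q q n +
      (\<Sum>k\<le>n. q ^ (n - k) * qbinomial q n k * ((-1) ^ Suc k * q ^ Suc k))"
    unfolding alt_qbinomial_sum_q_def by (rule qbinomial_sum_Suc')
  ultimately show ?thesis by simp
qed

lemma gauss_alt_qbinomial_sum: "alt_qbinomial_sum q (2 * n) = (\<Prod>i<n. 1 - q ^ (2 * i + 1))"
proof (induction n)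
  case 0 then show ?case by (simp add: alt_qbinomial_sum_def)
next
  case (Suc n)
  have "alt_qbinomial_sum q (2 * Suc n) =
      alt_qbinomial_sum q (2 * n) - q ^ Suc (2 * n) * alt_qbinomial_sum q (2 * n)"
    by (simp add: alt_qbinomial_sum_Suc alt_qbinomial_sum_q_Suc)
  then show ?case using Suc.IH by (simp add: algebra_simps)
qed

lemma sum_atMost_swap_triangle:
  fixes f :: "nat \<Rightarrow> nat \<Rightarrow> 'a::comm_monoid_add"
  shows "(\<Sum>j\<le>N. \<Sum>r\<le>j. f j r) = (\<Sum>r\<le>N. \<Sum>j\<in>{r..N}. f j r)"
proof (induction N)
  case 0 then show ?case by simp
next
  case (Suc N)
  have "(\<Sum>r\<le>N. \<Sum>j\<in>{r..Suc N}. f j r) = (\<Sum>r\<le>N. (\<Sum>j\<in>{r..N}. f j r) + f (Suc N) r)"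
    by (rule sum.cong) (auto simp: atLeastAtMostSuc_conv add.commute)
  then show ?case using Suc.IH by (simp add: sum.distrib)
qed

lemma sum_atMost_double_fold:
  fixes g :: "nat \<Rightarrow> 'a::comm_monoid_add"
  shows "(\<Sum>k\<le>2 * n. g k) = (\<Sum>r\<le>n. if r = 0 then g n else g (n + r) + g (n - r))"
proof -
  have "{..2 * n} = {..<n} \<union> {n} \<union> {n + 1..2 * n}" by auto
  then have "(\<Sum>k\<le>2 * n. g k) = (\<Sum>k\<in>{..<n} \<union> {n}. g k) + (\<Sum>k\<in>{n + 1..2 * n}. g k)"
    by (simp only:) (rule sum.union_disjoint, auto)
  also have "(\<Sum>k\<in>{..<n} \<union> {n}. g k) = (\<Sum>k<n. g k) + g n"
    by (subst sum.union_disjoint) auto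
  also have "(\<Sum>k<n. g k) = (\<Sum>r\<in>{1..n}. g (n - r))"
    by (rule sum.reindex_bij_witness[where i = "\<lambda>r. n - r" and j = "\<lambda>k. n - k"]) auto
  also have "(\<Sum>k\<in>{n + 1..2 * n}. g k) = (\<Sum>r\<in>{1..n}. g (n + r))"
    by (rule sum.reindex_bij_witness[where i = "\<lambda>r. n + r" and j = "\<lambda>k. k - n"]) auto
  finally have "(\<Sum>k\<le>2 * n. g k) = (\<Sum>r\<in>{1..n}. g (n - r)) + g n + (\<Sum>r\<in>{1..n}. g (n + r))" .
  moreover have "(\<Sum>r\<le>n. if r = 0 then g n else g (n + r) + g (n - r)) =
      g n + (\<Sum>r\<in>{1..n}. g (n + r) + g (n - r))"
  proof -
    have "{..n} = insert 0 {1..n}" by auto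
    then show ?thesis by (simp add: sum.distrib)
  qed
  ultimately show ?thesis by (simp add: sum.distrib algebra_simps)
qed

section \<open>Finite q-series identities\<close>

lemma qq_nth_0 [simp]: "qq $ 0 = 0"
  by (simp add: qq_def)

lemma zz_times_zinv: "zz * zinv = 1"
  by (simp add: zz_def zinv_def fls_X_inv_times_conv_shift)

lemma qpoch_eq_qpochhammer: "qpoch a n = qpochhammer qq a n"
  by (simp add: qpoch_def qpochhammer_def)

lemma qpoch_0 [simp]: "qpoch a 0 = 1"
  by (simp add: qpoch_def)

lemma qpoch_Suc: "qpoch a (Suc n) = qpoch a n * (1 - a * qq ^ n)"
  by (simp add: qpoch_def)

lemma qpoch_Suc_shift: "qpoch a (Suc n) = (1 - a) * qpoch (a * qq) n"
  by (simp add: qpoch_eq_qpochhammer qpochhammer_Suc_shift)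

lemma qpoch_add: "qpoch a (m + k) = qpoch a m * qpoch (a * qq ^ m) k"
  by (simp add: qpoch_eq_qpochhammer qpochhammer_add)

lemma qpoch_nth_0: "a $ 0 = 0 \<Longrightarrow> qpoch a n $ 0 = 1"
  by (induction n) (simp_all add: qpoch_Suc)

lemma qpoch_times_inverse: "a $ 0 = 0 \<Longrightarrow> qpoch a n * inverse (qpoch a n) = 1"
  by (rule inverse_mult_eq_1') (simp add: qpoch_nth_0)

definition qfact_inv :: "nat \<Rightarrow> qz" where
  "qfact_inv n = inverse (qpoch qq n)"

definition negqfact_inv :: "nat \<Rightarrow> qz" where
  "negqfact_inv n = inverse (qpoch (- qq) n)"

lemma qfact_inv_0 [simp]: "qfact_inv 0 = 1"
  by (simp add: qfact_inv_def)

lemma qpoch_qq_times_qfact_inv: "qpoch qq n * qfact_inv n = 1"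
  unfolding qfact_inv_def by (rule qpoch_times_inverse) simp

lemma qpoch_negq_times_negqfact_inv: "qpoch (- qq) n * negqfact_inv n = 1"
  unfolding negqfact_inv_def by (rule qpoch_times_inverse) simp

lemma qfact_inv_Suc: "qfact_inv n = qfact_inv (Suc n) * (1 - qq ^ Suc n)"
proof -
  have unit: "(1 - qq ^ Suc n) * inverse (1 - qq ^ Suc n) = 1"
    by (rule inverse_mult_eq_1') (simp add: qq_def)
  have "qpoch qq (Suc n) = qpoch qq n * (1 - qq ^ Suc n)"
    by (simp add: qpoch_Suc)
  then have "qfact_inv (Suc n) = qfact_inv n * inverse (1 - qq ^ Suc n)"
    unfolding qfact_inv_def by (simp only: fps_inverse_mult)
  then have "qfact_inv (Suc n) * (1 - qq ^ Suc n) = qfact_inv n * ((1 - qq ^ Suc n) * inverse (1 - qq ^ Suc n))"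
    by (simp only: mult_ac)
  then show ?thesis by (simp only: unit mult_1_right)
qed

lemma qfact_inv_add_times_qpoch: "qfact_inv (k + l) * qpoch (qq * qq ^ k) l = qfact_inv k"
proof -
  have "qfact_inv (k + l) = qfact_inv k * inverse (qpoch (qq * qq ^ k) l)"
    unfolding qfact_inv_def qpoch_add by (rule fps_inverse_mult)
  then have "qfact_inv (k + l) * qpoch (qq * qq ^ k) l =
      qfact_inv k * (qpoch (qq * qq ^ k) l * inverse (qpoch (qq * qq ^ k) l))"
    by (simp only: mult_ac)
  also have "\<dots> = qfact_inv k" by (simp add: qpoch_times_inverse)
  finally show ?thesis .
qed

lemma qbinomial_qq_eq: "k \<le> n \<Longrightarrow> qbinomial qq n k = qpoch qq n * (qfact_inv k * qfact_inv (n - k))"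
proof -
  assume "k \<le> n"
  then have "qbinomial qq n k * qpoch qq k * qpoch qq (n - k) = qpoch qq n"
    using qbinomial_qpochhammer[of k n qq] by (simp add: qpoch_eq_qpochhammer)
  then have "(qbinomial qq n k * qpoch qq k * qpoch qq (n - k)) * (qfact_inv k * qfact_inv (n - k)) =
      qpoch qq n * (qfact_inv k * qfact_inv (n - k))"
    by simp
  moreover have "(qbinomial qq n k * qpoch qq k * qpoch qq (n - k)) * (qfact_inv k * qfact_inv (n - k)) =
      qbinomial qq n k * ((qpoch qq k * qfact_inv k) * (qpoch qq (n - k) * qfact_inv (n - k)))"
    by (simp only: mult_ac)
  ultimately show ?thesis by (simp add: qpoch_qq_times_qfact_inv)
qed

lemma qbinomial_qq_mult:
  assumes "i + l \<le> m"
  shows "qbinomial qq m i * qbinomial qq (m - i) l = qbinomial qq m (i + l) * qbinomial qq (i + l) i"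
proof -
  have e: "m - i - l = m - (i + l)" "i + l - i = l" by auto
  have "qbinomial qq m i * qbinomial qq (m - i) l =
      qpoch qq m * (qfact_inv i * qfact_inv (m - i)) * (qpoch qq (m - i) * (qfact_inv l * qfact_inv (m - i - l)))"
    using assms by (simp add: qbinomial_qq_eq)
  also have "\<dots> = qpoch qq m * qfact_inv i * qfact_inv l * qfact_inv (m - (i + l)) *
      (qpoch qq (m - i) * qfact_inv (m - i))"
    unfolding e by (simp only: mult_ac)
  finally have 1: "qbinomial qq m i * qbinomial qq (m - i) l =
      qpoch qq m * qfact_inv i * qfact_inv l * qfact_inv (m - (i + l))"
    by (simp add: qpoch_qq_times_qfact_inv)
  have "qbinomial qq m (i + l) * qbinomial qq (i + l) i =
      qpoch qq m * (qfact_inv (i + l) * qfact_inv (m - (i + l))) *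
      (qpoch qq (i + l) * (qfact_inv i * qfact_inv (i + l - i)))"
    using assms by (simp add: qbinomial_qq_eq)
  also have "\<dots> = qpoch qq m * qfact_inv i * qfact_inv l * qfact_inv (m - (i + l)) *
      (qpoch qq (i + l) * qfact_inv (i + l))"
    unfolding e by (simp only: mult_ac)
  finally show ?thesis using 1 by (simp add: qpoch_qq_times_qfact_inv)
qed

lemma qpoch_qq_double: "qpoch qq (2 * n) = (\<Prod>i<n. 1 - qq ^ (2 * i + 1)) * qpoch qq n * qpoch (- qq) n"
proof (induction n)
  case 0 then show ?case by simp
next
  case (Suc n)
  have k: "(1 - qq ^ Suc n) * (1 - (- qq) * qq ^ n) = (1 - qq ^ Suc (Suc (2 * n)) :: qz)"
    by (simp add: algebra_simps power_add mult_2 mult_2_right)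
  have "qpoch qq (2 * Suc n) = qpoch qq (2 * n) * (1 - qq ^ Suc (2 * n)) * (1 - qq ^ Suc (Suc (2 * n)))"
    by (simp add: qpoch_Suc)
  also have "\<dots> = (\<Prod>i<n. 1 - qq ^ (2 * i + 1)) * (1 - qq ^ Suc (2 * n)) * qpoch qq n * qpoch (- qq) n *
      ((1 - qq ^ Suc n) * (1 - (- qq) * qq ^ n))"
    unfolding Suc.IH k by (simp only: mult_ac)
  also have "\<dots> = (\<Prod>i<Suc n. 1 - qq ^ (2 * i + 1)) * qpoch qq (Suc n) * qpoch (- qq) (Suc n)"
    by (simp add: qpoch_Suc mult_ac)
  finally show ?case .
qed

lemma qpoch_qbinomial_expansion:
  "qpoch x n = (\<Sum>k\<le>n. qbinomial qq n k * ((-1) ^ k * qq ^ (k choose 2) * x ^ k))"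
  by (simp add: qpoch_eq_qpochhammer qpochhammer_qbinomial_expansion)

text \<open>Expanding the last factor by the q-binomial theorem and collecting the terms along
  \<open>i + l = N\<close> leaves the inner sums of \<open>qbinomial_sum_qpochhammer\<close>.\<close>

lemma qpoch_aq_expansion:
  fixes a :: qz
  shows "(\<Sum>i\<le>m. qbinomial qq m i *
            (qpoch a i * (- a) ^ i * qq ^ (Suc i choose 2) * qpoch (a\<^sup>2 * qq ^ Suc i) (m - i))) =
         qpoch (a * qq) m"
proof -
  define f where "f N i = qbinomial qq m N * qbinomial qq N i *
      ((- a) ^ N * qq ^ (Suc N choose 2) * (qpoch a i * a ^ (N - i)))" for N i
  have summand: "qpoch a i * (- a) ^ i * qq ^ (Suc i choose 2) * ((-1) ^ l * qq ^ (l choose 2) * (a\<^sup>2 * qq ^ Suc i) ^ l) =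
      (- a) ^ (i + l) * qq ^ (Suc (i + l) choose 2) * (qpoch a i * a ^ l)" for i l
  proof -
    have "Suc (i + l) choose 2 = (Suc i choose 2) + (l choose 2) + Suc i * l"
      using choose_two_add[of "Suc i" l] by simp
    then show ?thesis
      by (simp add: power_add power_mult_distrib power_mult[symmetric] power_minus[of a]
          mult_2 mult_2_right mult_ac)
  qed
  have "(\<Sum>i\<le>m. qbinomial qq m i *
            (qpoch a i * (- a) ^ i * qq ^ (Suc i choose 2) * qpoch (a\<^sup>2 * qq ^ Suc i) (m - i))) =
      (\<Sum>i\<le>m. \<Sum>l\<le>m - i. f (i + l) i)"
  proof (rule sum.cong[OF refl])
    fix i assume "i \<in> {..m}"
    then have i: "i \<le> m" by simp
    have "qbinomial qq m i *
        (qpoch a i * (- a) ^ i * qq ^ (Suc i choose 2) * qpoch (a\<^sup>2 * qq ^ Suc i) (m - i)) =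
        (\<Sum>l\<le>m - i. qbinomial qq m i * qbinomial qq (m - i) l *
          (qpoch a i * (- a) ^ i * qq ^ (Suc i choose 2) *
            ((-1) ^ l * qq ^ (l choose 2) * (a\<^sup>2 * qq ^ Suc i) ^ l)))"
      unfolding qpoch_qbinomial_expansion[of "a\<^sup>2 * qq ^ Suc i" "m - i"] sum_distrib_left
      by (simp only: mult_ac)
    also have "\<dots> = (\<Sum>l\<le>m - i. f (i + l) i)"
    proof (rule sum.cong[OF refl])
      fix l assume "l \<in> {..m - i}"
      then have "i + l \<le> m" using i by simp
      then show "qbinomial qq m i * qbinomial qq (m - i) l *
          (qpoch a i * (- a) ^ i * qq ^ (Suc i choose 2) *
            ((-1) ^ l * qq ^ (l choose 2) * (a\<^sup>2 * qq ^ Suc i) ^ l)) = f (i + l) i"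
        unfolding summand f_def by (simp add: qbinomial_qq_mult)
    qed
    finally show "qbinomial qq m i *
        (qpoch a i * (- a) ^ i * qq ^ (Suc i choose 2) * qpoch (a\<^sup>2 * qq ^ Suc i) (m - i)) =
        (\<Sum>l\<le>m - i. f (i + l) i)" .
  qed
  also have "\<dots> = (\<Sum>(i, l)\<in>{(i, l). i + l \<le> m}. f (i + l) i)"
    by (subst sum.Sigma) (auto intro!: sum.cong)
  also have "\<dots> = (\<Sum>N\<le>m. \<Sum>i\<le>N. f (i + (N - i)) i)"
    by (rule sum.triangle_reindex_eq)
  also have "\<dots> = (\<Sum>N\<le>m. qbinomial qq m N * ((- a) ^ N * qq ^ (Suc N choose 2)) *
      (\<Sum>i\<le>N. qbinomial qq N i * (qpochhammer qq a i * a ^ (N - i))))"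
    unfolding sum_distrib_left by (intro sum.cong refl) (auto simp: f_def qpoch_eq_qpochhammer mult_ac)
  also have "\<dots> = (\<Sum>N\<le>m. qbinomial qq m N * ((-1) ^ N * qq ^ (N choose 2) * (a * qq) ^ N))"
    unfolding qbinomial_sum_qpochhammer
    by (intro sum.cong refl) (auto simp: power_minus[of a] power_mult_distrib mult_ac power_add)
  also have "\<dots> = qpoch (a * qq) m"
    by (simp only: qpoch_qbinomial_expansion)
  finally show ?thesis .
qed

section \<open>Bailey pairs\<close>

text \<open>Bailey pairs relative to \<open>a = 1\<close>.\<close>

definition bailey_pair :: "(nat \<Rightarrow> qz) \<Rightarrow> (nat \<Rightarrow> qz) \<Rightarrow> bool" where
  "bailey_pair \<alpha> \<beta> \<longleftrightarrow> (\<forall>n. \<beta> n = (\<Sum>r\<le>n. \<alpha> r * (qfact_inv (n - r) * qfact_inv (n + r))))"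

lemma bailey_transform:
  assumes pair: "bailey_pair \<alpha> \<beta>"
    and kernel: "\<And>r. r \<le> N \<Longrightarrow> (\<Sum>j\<in>{r..N}. A j * (qfact_inv (j - r) * qfact_inv (j + r))) =
                   C r * (qfact_inv (N - r) * qfact_inv (N + r))"
  shows "(\<Sum>j\<le>N. A j * \<beta> j) = (\<Sum>r\<le>N. \<alpha> r * C r * (qfact_inv (N - r) * qfact_inv (N + r)))"
proof -
  have "(\<Sum>j\<le>N. A j * \<beta> j) = (\<Sum>j\<le>N. \<Sum>r\<le>j. \<alpha> r * (A j * (qfact_inv (j - r) * qfact_inv (j + r))))"
    using pair by (intro sum.cong) (simp_all add: bailey_pair_def sum_distrib_left mult_ac)
  also have "\<dots> = (\<Sum>r\<le>N. \<Sum>j\<in>{r..N}. \<alpha> r * (A j * (qfact_inv (j - r) * qfact_inv (j + r))))"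
    by (rule sum_atMost_swap_triangle)
  also have "\<dots> = (\<Sum>r\<le>N. \<alpha> r * C r * (qfact_inv (N - r) * qfact_inv (N + r)))"
    by (intro sum.cong) (simp_all add: sum_distrib_left[symmetric] kernel)
  finally show ?thesis .
qed

lemma bailey_lemma:
  assumes pair: "bailey_pair \<alpha> \<beta>"
    and kernel: "\<And>N r. r \<le> N \<Longrightarrow> (\<Sum>j\<in>{r..N}. A N j * (qfact_inv (j - r) * qfact_inv (j + r))) =
                   c r * D N * (qfact_inv (N - r) * qfact_inv (N + r))"
    and D_inverse: "\<And>N. D' N * D N = 1"
  shows "bailey_pair (\<lambda>r. \<alpha> r * c r) (\<lambda>N. D' N * (\<Sum>j\<le>N. A N j * \<beta> j))"
  unfolding bailey_pair_def
proof
  fix N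
  have "D' N * (\<Sum>j\<le>N. A N j * \<beta> j) =
      D' N * (\<Sum>r\<le>N. \<alpha> r * (c r * D N) * (qfact_inv (N - r) * qfact_inv (N + r)))"
    using bailey_transform[OF pair kernel] by (simp add: mult.assoc)
  also have "\<dots> = (\<Sum>r\<le>N. \<alpha> r * c r * (qfact_inv (N - r) * qfact_inv (N + r)) * (D' N * D N))"
    by (simp add: sum_distrib_left mult_ac)
  finally show "D' N * (\<Sum>j\<le>N. A N j * \<beta> j) = (\<Sum>r\<le>N. \<alpha> r * c r * (qfact_inv (N - r) * qfact_inv (N + r)))"
    by (simp add: D_inverse)
qed

definition zpoch :: "nat \<Rightarrow> qz" where
  "zpoch n = qpoch zz n * qpoch zinv n"

definition zpoch_q :: "nat \<Rightarrow> qz" where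
  "zpoch_q n = qpoch (zz * qq) n * qpoch (zinv * qq) n"

definition zpoch_q_inv :: "nat \<Rightarrow> qz" where
  "zpoch_q_inv n = inverse (qpoch (zz * qq) n) * inverse (qpoch (zinv * qq) n)"

definition z_factor :: qz where
  "z_factor = (1 - zz) * (1 - zinv)"

definition z_weight :: "nat \<Rightarrow> qz" where
  "z_weight r = zpoch r * qq ^ r * zpoch_q_inv r"

lemma zpoch_q_inv_times_zpoch_q: "zpoch_q_inv n * zpoch_q n = 1"
proof -
  have "zpoch_q_inv n * zpoch_q n =
      (qpoch (zz * qq) n * inverse (qpoch (zz * qq) n)) * (qpoch (zinv * qq) n * inverse (qpoch (zinv * qq) n))"
    by (simp add: zpoch_q_def zpoch_q_inv_def mult_ac)
  then show ?thesis by (simp add: qpoch_times_inverse)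
qed

lemma zpoch_Suc: "zpoch (Suc n) = z_factor * zpoch_q n"
  by (simp add: zpoch_def zpoch_q_def z_factor_def qpoch_Suc_shift mult_ac)

lemma zpoch_q_Suc: "zpoch_q (Suc n) = zpoch_q n * ((1 - zz * qq ^ Suc n) * (1 - zinv * qq ^ Suc n))"
  by (simp add: zpoch_q_def qpoch_Suc mult_ac)

lemma zpoch_times_zpoch_q_inv:
  "zpoch r * zpoch_q_inv r * ((1 - zz * qq ^ r) * (1 - zinv * qq ^ r)) = z_factor"
proof -
  have "qpoch zz r * (1 - zz * qq ^ r) = (1 - zz) * qpoch (zz * qq) r"
    "qpoch zinv r * (1 - zinv * qq ^ r) = (1 - zinv) * qpoch (zinv * qq) r"
    by (simp_all flip: qpoch_Suc qpoch_Suc_shift)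
  then have "zpoch r * zpoch_q_inv r * ((1 - zz * qq ^ r) * (1 - zinv * qq ^ r)) =
      z_factor * (zpoch_q_inv r * zpoch_q r)"
    by (simp add: zpoch_def zpoch_q_def z_factor_def mult_ac)
  then show ?thesis by (simp add: zpoch_q_inv_times_zpoch_q)
qed

lemma reciprocal_products_diff:
  fixes z w Q S :: "'a::comm_ring_1"
  assumes "z * w = 1"
  shows "(1 - z * (Q * S)) * (1 - w * (Q * S)) - (1 - S) * (1 - S * (Q * Q)) = S * ((1 - z * Q) * (1 - w * Q))"
proof -
  have "(1 - z * (Q * S)) * (1 - w * (Q * S)) - (1 - S) * (1 - S * (Q * Q)) - S * ((1 - z * Q) * (1 - w * Q)) =
      (z * w - 1) * (Q * Q * S * S - Q * Q * S)"
    by (simp add: algebra_simps)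
  then show ?thesis using assms by simp
qed

text \<open>The kernel of the Bailey lemma with parameters \<open>z\<close> and \<open>z\<^sup>-\<^sup>1\<close>; the induction step
  is the instance \<open>Q = q\<^sup>r\<close>, \<open>S = q\<^bsup>N+1-r\<^esup>\<close> of \<open>reciprocal_products_diff\<close>.\<close>

lemma bailey_kernel_z:
  assumes "r \<le> N"
  shows "(\<Sum>j\<in>{r..N}. zpoch j * qq ^ j * (qfact_inv (j - r) * qfact_inv (j + r))) =
         z_weight r * zpoch_q N * (qfact_inv (N - r) * qfact_inv (N + r))"
  using assms
proof (induction N rule: dec_induct)
  case base
  have "z_weight r * zpoch_q r = zpoch r * qq ^ r"
    using zpoch_q_inv_times_zpoch_q[of r] by (simp add: z_weight_def mult_ac)
  then show ?case by simp
next
  case (step N)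
  define S where "S = qq ^ (Suc N - r)"
  define Den where "Den = (1 - zz * qq ^ Suc N) * (1 - zinv * qq ^ Suc N)"
  have "r + (Suc N - r) = Suc N" "Suc (N + r) = (Suc N - r) + r + r"
    using step.hyps(1) by simp_all
  then have S: "qq ^ r * S = qq ^ Suc N" "qq ^ Suc (N + r) = S * (qq ^ r * qq ^ r)"
    unfolding S_def by (metis power_add, metis power_add mult.assoc)
  have inv_minus: "qfact_inv (N - r) = qfact_inv (Suc N - r) * (1 - S)"
    using qfact_inv_Suc[of "N - r"] step.hyps(1) by (simp add: S_def Suc_diff_le)
  have inv_plus: "qfact_inv (N + r) = qfact_inv (Suc N + r) * (1 - S * (qq ^ r * qq ^ r))"
    using qfact_inv_Suc[of "N + r"] unfolding S(2) by simp
  have bracket: "Den - (1 - S) * (1 - S * (qq ^ r * qq ^ r)) = S * ((1 - zz * qq ^ r) * (1 - zinv * qq ^ r))"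
    unfolding Den_def S(1)[symmetric] by (rule reciprocal_products_diff[OF zz_times_zinv])
  have new_term: "z_weight r * zpoch_q N * (Den - (1 - S) * (1 - S * (qq ^ r * qq ^ r))) = zpoch (Suc N) * qq ^ Suc N"
  proof -
    have "z_weight r * zpoch_q N * (Den - (1 - S) * (1 - S * (qq ^ r * qq ^ r))) =
        (zpoch r * zpoch_q_inv r * ((1 - zz * qq ^ r) * (1 - zinv * qq ^ r))) * zpoch_q N * (qq ^ r * S)"
      unfolding bracket z_weight_def by (simp only: mult_ac)
    also have "\<dots> = zpoch (Suc N) * qq ^ Suc N"
      by (simp only: zpoch_times_zpoch_q_inv S(1) zpoch_Suc)
    finally show ?thesis .
  qed
  have "(\<Sum>j\<in>{r..Suc N}. zpoch j * qq ^ j * (qfact_inv (j - r) * qfact_inv (j + r))) =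
      z_weight r * zpoch_q N * (qfact_inv (N - r) * qfact_inv (N + r)) +
      zpoch (Suc N) * qq ^ Suc N * (qfact_inv (Suc N - r) * qfact_inv (Suc N + r))"
    using step by simp
  also have "\<dots> = z_weight r * zpoch_q N * Den * (qfact_inv (Suc N - r) * qfact_inv (Suc N + r))"
    unfolding inv_minus inv_plus new_term[symmetric] by (simp add: algebra_simps)
  also have "z_weight r * zpoch_q N * Den = z_weight r * zpoch_q (Suc N)"
    by (simp add: Den_def zpoch_q_Suc mult.assoc)
  finally show ?case by (simp add: mult.assoc)
qed

lemma bailey_lemma_z:
  "bailey_pair \<alpha> \<beta> \<Longrightarrow>
     bailey_pair (\<lambda>r. \<alpha> r * z_weight r) (\<lambda>N. zpoch_q_inv N * (\<Sum>j\<le>N. zpoch j * qq ^ j * \<beta> j))"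
  by (rule bailey_lemma[where A = "\<lambda>N j. zpoch j * qq ^ j" and D = zpoch_q])
     (simp_all add: bailey_kernel_z zpoch_q_inv_times_zpoch_q)

definition neg_weight :: "nat \<Rightarrow> qz" where
  "neg_weight r = qpoch (-1) r * qq ^ (Suc r choose 2) * negqfact_inv r"

text \<open>The kernel of the Bailey lemma with parameter \<open>-1\<close> (the other parameter tending to
  infinity); with \<open>a = -q\<^sup>r\<close> it is \<open>qpoch_aq_expansion\<close>.\<close>

lemma bailey_kernel_neg:
  assumes "r \<le> n"
  shows "(\<Sum>j\<in>{r..n}. qpoch (-1) j * qq ^ (Suc j choose 2) * qfact_inv (n - j) * (qfact_inv (j - r) * qfact_inv (j + r))) =
         neg_weight r * qpoch (- qq) n * (qfact_inv (n - r) * qfact_inv (n + r))"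
proof -
  obtain m where n: "n = r + m" using assms le_Suc_ex by blast
  define a :: qz where "a = - (qq ^ r)"
  define X where "X = qpoch (-1) r * qq ^ (Suc r choose 2) * qfact_inv m * qfact_inv (n + r)"
  have reindex: "(\<Sum>j\<in>{r..n}. qpoch (-1) j * qq ^ (Suc j choose 2) * qfact_inv (n - j) * (qfact_inv (j - r) * qfact_inv (j + r))) =
      (\<Sum>i\<le>m. qpoch (-1) (r + i) * qq ^ (Suc (r + i) choose 2) * qfact_inv (n - (r + i)) *
         (qfact_inv (r + i - r) * qfact_inv (r + i + r)))"
    by (rule sum.reindex_bij_witness[where i = "\<lambda>i. r + i" and j = "\<lambda>j. j - r"]) (auto simp: n)
  have summand: "qpoch (-1) (r + i) * qq ^ (Suc (r + i) choose 2) * qfact_inv (n - (r + i)) *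
        (qfact_inv (r + i - r) * qfact_inv (r + i + r)) =
      X * (qbinomial qq m i * (qpoch a i * (- a) ^ i * qq ^ (Suc i choose 2) * qpoch (a\<^sup>2 * qq ^ Suc i) (m - i)))"
    if i: "i \<le> m" for i
  proof -
    have L1: "qpoch (-1) r * qpoch a i = qpoch (-1) (r + i)"
      unfolding qpoch_add a_def by simp
    have "Suc (r + i) choose 2 = (Suc r choose 2) + (i choose 2) + Suc r * i"
      using choose_two_add[of "Suc r" i] by simp
    then have L2: "qq ^ (Suc r choose 2) * (- a) ^ i * qq ^ (Suc i choose 2) = qq ^ (Suc (r + i) choose 2)"
      unfolding a_def by (simp add: power_add power_mult[symmetric] mult_ac)
    have "n + r = (r + i + r) + (m - i)" using i n by simp
    moreover have "a\<^sup>2 * qq ^ Suc i = qq * qq ^ (r + i + r)"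
      unfolding a_def by (simp add: power_add power2_eq_square mult_ac)
    ultimately have L3: "qfact_inv (n + r) * qpoch (a\<^sup>2 * qq ^ Suc i) (m - i) = qfact_inv (r + i + r)"
      by (simp only: qfact_inv_add_times_qpoch)
    have L4: "qfact_inv m * qpoch qq m = 1"
      using qpoch_qq_times_qfact_inv[of m] by (simp add: mult_ac)
    have e: "n - (r + i) = m - i" "r + i - r = i" using n by auto
    have "X * (qbinomial qq m i * (qpoch a i * (- a) ^ i * qq ^ (Suc i choose 2) * qpoch (a\<^sup>2 * qq ^ Suc i) (m - i))) =
        (qpoch (-1) r * qpoch a i) * (qq ^ (Suc r choose 2) * (- a) ^ i * qq ^ (Suc i choose 2)) *
        (qfact_inv (n + r) * qpoch (a\<^sup>2 * qq ^ Suc i) (m - i)) * (qfact_inv m * qpoch qq m) *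
        (qfact_inv i * qfact_inv (m - i))"
      unfolding X_def qbinomial_qq_eq[OF i] by (simp only: mult_ac)
    also have "\<dots> = qpoch (-1) (r + i) * qq ^ (Suc (r + i) choose 2) * qfact_inv (r + i + r) *
        (qfact_inv i * qfact_inv (m - i))"
      unfolding L1 L2 L3 L4 by simp
    finally show ?thesis unfolding e by (simp only: mult_ac)
  qed
  have "(\<Sum>j\<in>{r..n}. qpoch (-1) j * qq ^ (Suc j choose 2) * qfact_inv (n - j) * (qfact_inv (j - r) * qfact_inv (j + r))) =
      X * qpoch (a * qq) m"
    unfolding reindex qpoch_aq_expansion[symmetric] sum_distrib_left
    by (intro sum.cong refl summand) simp
  also have "X * qpoch (a * qq) m = neg_weight r * qpoch (- qq) n * (qfact_inv (n - r) * qfact_inv (n + r))"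
  proof -
    have "qpoch (- qq) n = qpoch (- qq) r * qpoch (a * qq) m"
      unfolding n qpoch_add a_def by (simp add: mult_ac)
    then have "neg_weight r * qpoch (- qq) n * (qfact_inv (n - r) * qfact_inv (n + r)) =
        qpoch (-1) r * qq ^ (Suc r choose 2) * (qpoch (- qq) r * negqfact_inv r) * qpoch (a * qq) m *
        (qfact_inv m * qfact_inv (n + r))"
      unfolding neg_weight_def using n by (simp only: mult_ac) simp
    also have "\<dots> = X * qpoch (a * qq) m"
      unfolding qpoch_negq_times_negqfact_inv X_def by (simp add: mult_ac)
    finally show ?thesis by simp
  qed
  finally show ?thesis .
qed

lemma bailey_lemma_neg:
  assumes "bailey_pair \<alpha> \<beta>"
  shows "bailey_pair (\<lambda>r. \<alpha> r * neg_weight r)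
           (\<lambda>N. negqfact_inv N * (\<Sum>j\<le>N. qpoch (-1) j * qq ^ (Suc j choose 2) * qfact_inv (N - j) * \<beta> j))"
proof (rule bailey_lemma[where A = "\<lambda>N j. qpoch (-1) j * qq ^ (Suc j choose 2) * qfact_inv (N - j)"
      and D = "qpoch (- qq)"])
  show "negqfact_inv N * qpoch (- qq) N = 1" for N
    using qpoch_negq_times_negqfact_inv[of N] by (simp only: mult.commute)
qed (use assms bailey_kernel_neg in simp_all)

lemma choose_two_exponent_plus:
  "r \<le> n \<Longrightarrow> (n + r choose 2) + n * (2 * n - (n + r)) = (n choose 2) + n * n + (r choose 2)"
proof -
  assume "r \<le> n"
  then obtain s where s: "n = r + s" using le_Suc_ex by blast
  then have "2 * n - (n + r) = s" by simp
  then show ?thesis using s by (simp add: choose_two_add algebra_simps)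
qed

lemma choose_two_exponent_minus:
  "r \<le> n \<Longrightarrow> (n - r choose 2) + n * (2 * n - (n - r)) = (n choose 2) + n * n + (Suc r choose 2)"
proof -
  assume "r \<le> n"
  then obtain s where s: "n = r + s" using le_Suc_ex by blast
  then have "n - r = s" "2 * n - (n - r) = n + r" by auto
  then show ?thesis
    unfolding s using choose_two_double[of r] by (simp add: choose_two_add algebra_simps)
qed

lemma neg_one_power_diff: "r \<le> n \<Longrightarrow> (-1 :: 'a::ring_1) ^ (n - r) = (-1) ^ (n + r)"
proof -
  assume "r \<le> n"
  then have "n + r = (n - r) + 2 * r" by simp
  then have "(-1 :: 'a) ^ (n + r) = (-1) ^ (n - r) * ((-1) ^ 2) ^ r"
    by (simp only: power_add power_mult)
  then show ?thesis by simp
qed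

text \<open>The q-binomial expansion of the vanishing product \<open>\<Prod>\<^sub>i\<^sub><\<^sub>2\<^sub>n (q\<^sup>n - q\<^sup>i)\<close>.\<close>

lemma qbinomial_vanishing_sum:
  assumes "n \<noteq> 0"
  shows "(\<Sum>k\<le>2 * n. (-1) ^ k * qq ^ ((k choose 2) + n * (2 * n - k)) * (qfact_inv k * qfact_inv (2 * n - k))) = 0"
    (is "(\<Sum>k\<le>2 * n. ?g k) = 0")
proof -
  have "(\<Prod>i<2 * n. qq ^ n - 1 * qq ^ i) = 0"
    by (rule prod_zero) (use assms in \<open>auto intro!: bexI[where x = n]\<close>)
  then have "(\<Sum>k\<le>2 * n. qbinomial qq (2 * n) k * ((-1) ^ k * qq ^ (k choose 2) * 1 ^ k * (qq ^ n) ^ (2 * n - k))) = 0"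
    by (simp only: qbinomial_theorem_homogeneous)
  moreover have "(\<Sum>k\<le>2 * n. qbinomial qq (2 * n) k * ((-1) ^ k * qq ^ (k choose 2) * 1 ^ k * (qq ^ n) ^ (2 * n - k))) =
      qpoch qq (2 * n) * (\<Sum>k\<le>2 * n. ?g k)"
    unfolding sum_distrib_left
    by (rule sum.cong) (auto simp: qbinomial_qq_eq power_add power_mult[symmetric] mult_ac)
  moreover have "qpoch qq (2 * n) \<noteq> 0"
    using qpoch_qq_times_qfact_inv[of "2 * n"] by auto
  ultimately show ?thesis by simp
qed

definition unit_alpha :: "nat \<Rightarrow> qz" where
  "unit_alpha r = (if r = 0 then 1 else (-1) ^ r * qq ^ (r choose 2) * (1 + qq ^ r))"

lemma bailey_pair_unit: "bailey_pair unit_alpha (\<lambda>n. if n = 0 then 1 else 0)"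
  unfolding bailey_pair_def
proof
  fix n
  show "(if n = 0 then 1 else 0) = (\<Sum>r\<le>n. unit_alpha r * (qfact_inv (n - r) * qfact_inv (n + r)))"
  proof (cases "n = 0")
    case True then show ?thesis by (simp add: unit_alpha_def)
  next
    case False
    define E where "E = (n choose 2) + n * n"
    define g where "g k = (-1) ^ k * qq ^ ((k choose 2) + n * (2 * n - k)) * (qfact_inv k * qfact_inv (2 * n - k))" for k
    have "(\<Sum>r\<le>n. if r = 0 then g n else g (n + r) + g (n - r)) = 0"
      using qbinomial_vanishing_sum[OF False] unfolding g_def[abs_def] sum_atMost_double_fold .
    moreover have "(\<Sum>r\<le>n. if r = 0 then g n else g (n + r) + g (n - r)) =
        (-1) ^ n * qq ^ E * (\<Sum>r\<le>n. unit_alpha r * (qfact_inv (n - r) * qfact_inv (n + r)))"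
      unfolding sum_distrib_left
    proof (rule sum.cong[OF refl])
      fix r assume "r \<in> {..n}"
      then have r: "r \<le> n" by simp
      show "(if r = 0 then g n else g (n + r) + g (n - r)) =
          (-1) ^ n * qq ^ E * (unit_alpha r * (qfact_inv (n - r) * qfact_inv (n + r)))"
      proof (cases "r = 0")
        case True then show ?thesis by (simp add: g_def unit_alpha_def E_def)
      next
        case False
        have "g (n + r) = (-1) ^ (n + r) * qq ^ (E + (r choose 2)) * (qfact_inv (n - r) * qfact_inv (n + r))"
          unfolding g_def E_def using choose_two_exponent_plus[OF r] r by (simp add: mult_ac)
        moreover have "g (n - r) = (-1) ^ (n + r) * qq ^ (E + (Suc r choose 2)) * (qfact_inv (n - r) * qfact_inv (n + r))"
          unfolding g_def E_def using choose_two_exponent_minus[OF r] r neg_one_power_diff[OF r, where 'a = qz]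
          by (simp add: mult_ac)
        ultimately show ?thesis
          using False unfolding unit_alpha_def by (simp add: power_add algebra_simps)
      qed
    qed
    ultimately have "(-1) ^ n * qq ^ E * (\<Sum>r\<le>n. unit_alpha r * (qfact_inv (n - r) * qfact_inv (n + r))) = 0"
      by simp
    then show ?thesis using False by (simp add: qq_def)
  qed
qed

text \<open>Gauss's identity, with \<open>(q; q)\<^sub>2\<^sub>n = (q; q\<^sup>2)\<^sub>n (q; q)\<^sub>n (-q; q)\<^sub>n\<close>.\<close>

lemma gauss_qfact_inv_sum:
  "(\<Sum>k\<le>2 * n. (-1) ^ k * (qfact_inv k * qfact_inv (2 * n - k))) = qfact_inv n * negqfact_inv n"
  (is "?S = _")
proof -
  define P where "P = (\<Prod>i<n. 1 - qq ^ (2 * i + 1))"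
  have "P = alt_qbinomial_sum qq (2 * n)"
    unfolding P_def by (rule gauss_alt_qbinomial_sum[symmetric])
  also have "\<dots> = qpoch qq (2 * n) * ?S"
    unfolding alt_qbinomial_sum_def sum_distrib_left
    by (rule sum.cong) (auto simp: qbinomial_qq_eq mult_ac)
  finally have P: "P = qpoch qq (2 * n) * ?S" .
  have "(\<Prod>i<k. 1 - qq ^ (2 * i + 1)) $ 0 = 1" for k
    by (induction k) (simp_all add: qq_def)
  then have P_unit: "inverse P * P = 1"
    unfolding P_def by (intro inverse_mult_eq_1) simp
  have "?S = (qfact_inv (2 * n) * qpoch qq (2 * n)) * ?S"
    using qpoch_qq_times_qfact_inv[of "2 * n"] by (simp add: mult.commute)
  also have "\<dots> = qfact_inv (2 * n) * P"
    unfolding P by (simp only: mult.assoc)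
  also have "qfact_inv (2 * n) = inverse P * (qfact_inv n * negqfact_inv n)"
    unfolding qfact_inv_def negqfact_inv_def qpoch_qq_double P_def by (simp add: fps_inverse_mult mult_ac)
  finally show ?thesis
    using P_unit by (simp add: mult_ac)
qed

definition gauss_alpha :: "nat \<Rightarrow> qz" where
  "gauss_alpha r = (if r = 0 then 1 else 2 * (-1) ^ r)"

lemma bailey_pair_gauss: "bailey_pair gauss_alpha (\<lambda>n. (-1) ^ n * (qfact_inv n * negqfact_inv n))"
  unfolding bailey_pair_def
proof
  fix n
  define g where "g k = (-1) ^ k * (qfact_inv k * qfact_inv (2 * n - k))" for k
  have "(\<Sum>k\<le>2 * n. g k) = (-1) ^ n * (\<Sum>r\<le>n. gauss_alpha r * (qfact_inv (n - r) * qfact_inv (n + r)))"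
    unfolding sum_atMost_double_fold sum_distrib_left
  proof (rule sum.cong[OF refl])
    fix r assume "r \<in> {..n}"
    then have r: "r \<le> n" by simp
    show "(if r = 0 then g n else g (n + r) + g (n - r)) =
        (-1) ^ n * (gauss_alpha r * (qfact_inv (n - r) * qfact_inv (n + r)))"
    proof (cases "r = 0")
      case True then show ?thesis by (simp add: g_def gauss_alpha_def)
    next
      case False
      have "2 * n - (n + r) = n - r" "2 * n - (n - r) = n + r" using r by auto
      then have "g (n + r) + g (n - r) = 2 * (-1) ^ (n + r) * (qfact_inv (n - r) * qfact_inv (n + r))"
        unfolding g_def neg_one_power_diff[OF r, where 'a = qz] by (simp add: mult_ac)
      then show ?thesis using False by (simp add: gauss_alpha_def power_add mult_ac)
    qed
  qed
  then have "(-1) ^ n * (qfact_inv n * negqfact_inv n) =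
      ((-1) ^ n * (-1) ^ n) * (\<Sum>r\<le>n. gauss_alpha r * (qfact_inv (n - r) * qfact_inv (n + r)))"
    unfolding g_def gauss_qfact_inv_sum by (simp only: mult.assoc)
  then show "(-1) ^ n * (qfact_inv n * negqfact_inv n) =
      (\<Sum>r\<le>n. gauss_alpha r * (qfact_inv (n - r) * qfact_inv (n + r)))"
    by (simp add: power_add[symmetric] mult_2[symmetric] power_mult)
qed

lemma bailey_pair_z_unit: "bailey_pair (\<lambda>r. unit_alpha r * z_weight r) zpoch_q_inv"
proof -
  have "(\<lambda>N. zpoch_q_inv N * (\<Sum>j\<le>N. zpoch j * qq ^ j * (if j = 0 then 1 else 0))) = zpoch_q_inv"
    by (simp add: zpoch_def if_distrib sum.delta cong: if_cong)
  then show ?thesis using bailey_lemma_z[OF bailey_pair_unit] by simp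
qed

lemma bailey_pair_neg_unit: "bailey_pair (\<lambda>r. unit_alpha r * neg_weight r) (\<lambda>j. qfact_inv j * negqfact_inv j)"
proof -
  have "(\<lambda>N. negqfact_inv N * (\<Sum>j\<le>N. qpoch (-1) j * qq ^ (Suc j choose 2) * qfact_inv (N - j) *
      (if j = 0 then 1 else 0))) = (\<lambda>j. qfact_inv j * negqfact_inv j)"
    by (simp add: if_distrib sum.delta mult.commute cong: if_cong)
  then show ?thesis using bailey_lemma_neg[OF bailey_pair_unit] by simp
qed

text \<open>Both sides are the \<open>\<beta>\<close> of the Bailey pair obtained from the unit pair by applying
  the two Bailey lemmas in either order.\<close>

lemma rank_bailey_identity:
  "negqfact_inv N * (\<Sum>k\<le>N. qpoch (-1) k * qq ^ (Suc k choose 2) * qfact_inv (N - k) * zpoch_q_inv k) =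
   zpoch_q_inv N * (\<Sum>j\<le>N. zpoch j * qq ^ j * (qfact_inv j * negqfact_inv j))"
proof -
  have "bailey_pair (\<lambda>r. unit_alpha r * z_weight r * neg_weight r)
      (\<lambda>N. negqfact_inv N * (\<Sum>k\<le>N. qpoch (-1) k * qq ^ (Suc k choose 2) * qfact_inv (N - k) * zpoch_q_inv k))"
    by (rule bailey_lemma_neg[OF bailey_pair_z_unit])
  moreover have "bailey_pair (\<lambda>r. unit_alpha r * neg_weight r * z_weight r)
      (\<lambda>N. zpoch_q_inv N * (\<Sum>j\<le>N. zpoch j * qq ^ j * (qfact_inv j * negqfact_inv j)))"
    by (rule bailey_lemma_z[OF bailey_pair_neg_unit])
  ultimately show ?thesis
    unfolding bailey_pair_def by (simp add: mult_ac)
qed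

section \<open>Passing to the limit\<close>

lemma fps_vanishes_below_qq_power_mult: "fps_vanishes_below k (qq ^ k * f)"
  using fps_vanishes_below_X_power_mult by (simp add: qq_def)

lemma qpoch_inf_eq_upto:
  fixes a :: qz
  assumes "a $ 0 = 0" and "n \<le> m"
  shows "fps_eq_upto n (qpoch_inf a) (qpoch a m)"
  unfolding qpoch_inf_def qpoch_def
proof (rule prodinf_fps_eq_upto[OF _ assms(2)])
  fix k
  have "fps_vanishes_below 1 a" using assms(1) by (simp add: fps_vanishes_below_def)
  then show "fps_vanishes_below (Suc k) (a * qq ^ k)"
    using fps_vanishes_below_mult[of 1 a k "qq ^ k"] fps_vanishes_below_qq_power_mult[of k 1] by simp
qed

lemma qpoch_inf_nth_0: "a $ 0 = 0 \<Longrightarrow> qpoch_inf a $ 0 = 1"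
  using qpoch_inf_eq_upto[of a 0 0] by (simp add: fps_eq_upto_def)

lemma qpoch_inf_times_inverse: "a $ 0 = 0 \<Longrightarrow> qpoch_inf a * inverse (qpoch_inf a) = 1"
  by (rule inverse_mult_eq_1') (simp add: qpoch_inf_nth_0)

lemma inverse_qpoch_eq_upto:
  fixes a :: qz
  assumes "a $ 0 = 0" and "n \<le> m"
  shows "fps_eq_upto n (inverse (qpoch a m)) (inverse (qpoch_inf a))"
  using assms by (intro fps_eq_upto_inverse fps_eq_upto_sym[OF qpoch_inf_eq_upto]) (simp_all add: qpoch_nth_0)

lemma qpoch_inf_split:
  fixes a :: qz
  assumes a: "a $ 0 = 0"
  shows "qpoch_inf a = qpoch a m * qpoch_inf (a * qq ^ m)"
proof (rule fps_eqI_eq_upto)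
  fix n
  have "fps_eq_upto n (qpoch_inf a) (qpoch a m * qpoch (a * qq ^ m) n)"
    using qpoch_inf_eq_upto[OF a, of n "m + n"] by (simp add: qpoch_add)
  also have "fps_eq_upto n (qpoch a m * qpoch (a * qq ^ m) n) (qpoch a m * qpoch_inf (a * qq ^ m))"
    using a by (intro fps_eq_upto_mult fps_eq_upto_refl fps_eq_upto_sym[OF qpoch_inf_eq_upto]) simp_all
  finally show "fps_eq_upto n (qpoch_inf a) (qpoch a m * qpoch_inf (a * qq ^ m))" .
qed

lemma qpoch_inf_shift:
  fixes a :: qz
  assumes "a $ 0 = 0"
  shows "qpoch_inf (a * qq ^ m) = inverse (qpoch a m) * qpoch_inf a"
proof -
  have "inverse (qpoch a m) * qpoch_inf a = (inverse (qpoch a m) * qpoch a m) * qpoch_inf (a * qq ^ m)"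
    by (subst qpoch_inf_split[OF assms, of m]) (simp add: mult_ac)
  then show ?thesis using qpoch_times_inverse[OF assms, of m] by (simp add: mult_ac)
qed

lemma inverse_qpoch_inf_shift:
  fixes a :: qz
  assumes "a $ 0 = 0"
  shows "inverse (qpoch_inf (a * qq ^ m)) = qpoch a m * inverse (qpoch_inf a)"
proof -
  have "inverse (qpoch_inf a) = inverse (qpoch a m) * inverse (qpoch_inf (a * qq ^ m))"
    by (subst qpoch_inf_split[OF assms, of m]) (rule fps_inverse_mult)
  then have "qpoch a m * inverse (qpoch_inf a) =
      (qpoch a m * inverse (qpoch a m)) * inverse (qpoch_inf (a * qq ^ m))"
    by (simp add: mult_ac)
  then show ?thesis using qpoch_times_inverse[OF assms, of m] by simp
qed

definition Phi :: qz where
  "Phi = qpoch_inf (- qq) * qpoch_inf qq * inverse (qpoch_inf (zz * qq)) * inverse (qpoch_inf (zinv * qq))"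

definition rank_term :: "nat \<Rightarrow> qz" where
  "rank_term k = qpoch (-1) k * qq ^ (Suc k choose 2) * zpoch_q_inv k"

definition bailey_term :: "nat \<Rightarrow> qz" where
  "bailey_term j = zpoch j * qq ^ j * (qfact_inv j * negqfact_inv j)"

lemma overpart_rank_gf_eq_suminf: "overpart_rank_gf = suminf rank_term"
proof -
  have "qpoch (-1) n * qq ^ (n * (n + 1) div 2) / (qpoch (zz * qq) n * qpoch (zinv * qq) n) = rank_term n" for n
  proof -
    have "(qpoch (zz * qq) n * qpoch (zinv * qq) n) $ 0 \<noteq> 0" by (simp add: qpoch_nth_0)
    moreover have "n * (n + 1) div 2 = Suc n choose 2" by (simp add: choose_two)
    ultimately show ?thesis
      by (simp add: fps_divide_unit rank_term_def zpoch_q_inv_def fps_inverse_mult mult_ac)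
  qed
  then show ?thesis unfolding overpart_rank_gf_def by simp
qed

lemma rank_term_vanishes_below: "fps_vanishes_below k (rank_term k)"
  using fps_vanishes_below_qq_power_mult[of k "qpoch (-1) k * qq ^ (k choose 2) * zpoch_q_inv k"]
  by (simp add: rank_term_def power_add mult_ac)

lemma bailey_term_vanishes_below: "fps_vanishes_below k (bailey_term k)"
  using fps_vanishes_below_qq_power_mult[of k "zpoch k * (qfact_inv k * negqfact_inv k)"]
  by (simp add: bailey_term_def mult_ac)

lemma z_weight_vanishes_below: "fps_vanishes_below k (z_weight k)"
  using fps_vanishes_below_qq_power_mult[of k "zpoch k * zpoch_q_inv k"]
  by (simp add: z_weight_def mult_ac)

text \<open>The limit \<open>N \<rightarrow> \<infinity>\<close> of \<open>rank_bailey_identity\<close>; degree \<open>n\<close> is settled at \<open>N = 2n\<close>.\<close>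

lemma suminf_rank_term:
  "suminf rank_term * inverse (qpoch_inf qq) * inverse (qpoch_inf (- qq)) =
   inverse (qpoch_inf (zz * qq)) * inverse (qpoch_inf (zinv * qq)) * suminf bailey_term"
proof (rule fps_eqI_eq_upto)
  fix n :: nat
  define N where "N = 2 * n"
  have "fps_eq_upto n (\<Sum>k\<le>N. rank_term k * qfact_inv (N - k)) (suminf rank_term * inverse (qpoch_inf qq))"
    unfolding qfact_inv_def
    by (rule fps_eq_upto_weighted_sum[OF rank_term_vanishes_below inverse_qpoch_eq_upto])
       (simp_all add: N_def)
  moreover have "fps_eq_upto n (negqfact_inv N) (inverse (qpoch_inf (- qq)))"
    unfolding negqfact_inv_def by (rule inverse_qpoch_eq_upto) (simp_all add: N_def)
  ultimately have "fps_eq_upto n (suminf rank_term * inverse (qpoch_inf qq) * inverse (qpoch_inf (- qq)))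
      ((\<Sum>k\<le>N. rank_term k * qfact_inv (N - k)) * negqfact_inv N)"
    by (rule fps_eq_upto_sym[OF fps_eq_upto_mult])
  also have "(\<Sum>k\<le>N. rank_term k * qfact_inv (N - k)) * negqfact_inv N = zpoch_q_inv N * (\<Sum>j\<le>N. bailey_term j)"
    using rank_bailey_identity[of N] by (simp add: rank_term_def bailey_term_def mult_ac)
  also have "fps_eq_upto n \<dots> (inverse (qpoch_inf (zz * qq)) * inverse (qpoch_inf (zinv * qq)) * suminf bailey_term)"
  proof (rule fps_eq_upto_mult)
    show "fps_eq_upto n (zpoch_q_inv N) (inverse (qpoch_inf (zz * qq)) * inverse (qpoch_inf (zinv * qq)))"
      unfolding zpoch_q_inv_def by (intro fps_eq_upto_mult inverse_qpoch_eq_upto) (simp_all add: N_def)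
    show "fps_eq_upto n (\<Sum>j\<le>N. bailey_term j) (suminf bailey_term)"
      by (rule fps_eq_upto_sym, rule suminf_fps_eq_upto[OF bailey_term_vanishes_below]) (simp add: N_def)
  qed
  finally show "fps_eq_upto n (suminf rank_term * inverse (qpoch_inf qq) * inverse (qpoch_inf (- qq)))
      (inverse (qpoch_inf (zz * qq)) * inverse (qpoch_inf (zinv * qq)) * suminf bailey_term)" .
qed

lemma overpart_rank_gf_eq: "overpart_rank_gf = Phi * suminf bailey_term"
proof -
  have "overpart_rank_gf = suminf rank_term * inverse (qpoch_inf qq) * inverse (qpoch_inf (- qq)) *
      (qpoch_inf qq * qpoch_inf (- qq))"
    by (simp add: overpart_rank_gf_eq_suminf qpoch_inf_times_inverse mult_ac)
  also have "\<dots> = Phi * suminf bailey_term"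
    unfolding suminf_rank_term by (simp add: Phi_def mult_ac)
  finally show ?thesis .
qed

text \<open>The limit of the Bailey lemma applied to Gauss's pair, again settled at \<open>N = 2n\<close>.\<close>

lemma suminf_alternating_bailey_term:
  "suminf (\<lambda>j. (-1) ^ j * bailey_term j) =
   qpoch_inf (zz * qq) * qpoch_inf (zinv * qq) * (inverse (qpoch_inf qq) * inverse (qpoch_inf qq)) *
   suminf (\<lambda>r. gauss_alpha r * z_weight r)"
  (is "_ = ?C * _")
proof (rule fps_eqI_eq_upto)
  fix n :: nat
  define N where "N = 2 * n"
  have "fps_eq_upto n (suminf (\<lambda>j. (-1) ^ j * bailey_term j)) (\<Sum>j\<le>N. (-1) ^ j * bailey_term j)"
    by (rule suminf_fps_eq_upto)
       (simp_all add: N_def bailey_term_vanishes_below fps_vanishes_below_mult_left)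
  also have "(\<Sum>j\<le>N. (-1) ^ j * bailey_term j) =
      (\<Sum>r\<le>N. gauss_alpha r * z_weight r * (zpoch_q N * (qfact_inv (N - r) * qfact_inv (N + r))))"
  proof -
    have pair: "zpoch_q_inv N * (\<Sum>j\<le>N. (-1) ^ j * bailey_term j) =
        (\<Sum>r\<le>N. gauss_alpha r * z_weight r * (qfact_inv (N - r) * qfact_inv (N + r)))"
      using bailey_lemma_z[OF bailey_pair_gauss]
      unfolding bailey_pair_def by (simp add: bailey_term_def mult_ac)
    have "(\<Sum>j\<le>N. (-1) ^ j * bailey_term j) = (zpoch_q_inv N * zpoch_q N) * (\<Sum>j\<le>N. (-1) ^ j * bailey_term j)"
      by (simp add: zpoch_q_inv_times_zpoch_q)
    also have "\<dots> = zpoch_q N * (zpoch_q_inv N * (\<Sum>j\<le>N. (-1) ^ j * bailey_term j))"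
      by (simp only: mult_ac)
    also have "\<dots> = (\<Sum>r\<le>N. gauss_alpha r * z_weight r * (zpoch_q N * (qfact_inv (N - r) * qfact_inv (N + r))))"
      unfolding pair by (simp add: sum_distrib_left mult_ac)
    finally show ?thesis .
  qed
  also have "fps_eq_upto n \<dots> (suminf (\<lambda>r. gauss_alpha r * z_weight r) * ?C)"
  proof (rule fps_eq_upto_weighted_sum)
    show "fps_vanishes_below k (gauss_alpha k * z_weight k)" for k
      by (rule fps_vanishes_below_mult_left[OF z_weight_vanishes_below])
    show "fps_eq_upto n (zpoch_q N * (qfact_inv (N - r) * qfact_inv (N + r))) ?C" if "r \<le> n" for r
      using that unfolding zpoch_q_def qfact_inv_def
      by (intro fps_eq_upto_mult fps_eq_upto_sym[OF qpoch_inf_eq_upto] inverse_qpoch_eq_upto)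
         (simp_all add: N_def)
  qed (simp add: N_def)
  finally show "fps_eq_upto n (suminf (\<lambda>j. (-1) ^ j * bailey_term j)) (?C * suminf (\<lambda>r. gauss_alpha r * z_weight r))"
    by (simp only: mult.commute)
qed

lemma Phi_times_suminf_alternating_bailey_term:
  "Phi * suminf (\<lambda>j. (-1) ^ j * bailey_term j) =
   qpoch_inf (- qq) * inverse (qpoch_inf qq) * suminf (\<lambda>r. gauss_alpha r * z_weight r)"
proof -
  have "Phi * suminf (\<lambda>j. (-1) ^ j * bailey_term j) =
      qpoch_inf (- qq) * inverse (qpoch_inf qq) * suminf (\<lambda>r. gauss_alpha r * z_weight r) *
      ((qpoch_inf qq * inverse (qpoch_inf qq)) * (qpoch_inf (zz * qq) * inverse (qpoch_inf (zz * qq))) *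
       (qpoch_inf (zinv * qq) * inverse (qpoch_inf (zinv * qq))))"
    unfolding suminf_alternating_bailey_term Phi_def by (simp add: mult_ac)
  then show ?thesis by (simp add: qpoch_inf_times_inverse)
qed

definition S1_term :: "nat \<Rightarrow> qz" where
  "S1_term n = qq ^ Suc (2 * n) * (qfact_inv (Suc (2 * n)) * negqfact_inv (Suc (2 * n))) * zpoch_q (2 * n)"

lemma S1bar_eq_suminf: "S1bar = suminf (\<lambda>n. Phi * S1_term n)"
proof -
  have "qq ^ (2 * n + 1) * qpoch_inf (- (qq ^ (2 * n + 2))) * qpoch_inf (qq ^ (2 * n + 2)) /
        (qpoch_inf (zz * qq ^ (2 * n + 1)) * qpoch_inf (zinv * qq ^ (2 * n + 1))) = Phi * S1_term n" for n
  proof -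
    have "qpoch_inf (- (qq ^ (2 * n + 2))) = negqfact_inv (Suc (2 * n)) * qpoch_inf (- qq)"
      using qpoch_inf_shift[of "- qq" "Suc (2 * n)"] by (simp add: negqfact_inv_def)
    moreover have "qpoch_inf (qq ^ (2 * n + 2)) = qfact_inv (Suc (2 * n)) * qpoch_inf qq"
      using qpoch_inf_shift[of qq "Suc (2 * n)"] by (simp add: qfact_inv_def)
    moreover have "inverse (qpoch_inf (zz * qq ^ (2 * n + 1))) = qpoch (zz * qq) (2 * n) * inverse (qpoch_inf (zz * qq))"
      using inverse_qpoch_inf_shift[of "zz * qq" "2 * n"] by (simp add: mult_ac)
    moreover have "inverse (qpoch_inf (zinv * qq ^ (2 * n + 1))) =
        qpoch (zinv * qq) (2 * n) * inverse (qpoch_inf (zinv * qq))"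
      using inverse_qpoch_inf_shift[of "zinv * qq" "2 * n"] by (simp add: mult_ac)
    moreover have "(qpoch_inf (zz * qq ^ (2 * n + 1)) * qpoch_inf (zinv * qq ^ (2 * n + 1))) $ 0 \<noteq> 0"
      by (simp add: qpoch_inf_nth_0)
    ultimately show ?thesis
      by (simp add: fps_divide_unit fps_inverse_mult Phi_def S1_term_def zpoch_q_def mult_ac)
  qed
  then show ?thesis unfolding S1bar_def by simp
qed

lemma sum_lessThan_double_alternating:
  fixes f :: "nat \<Rightarrow> 'a::comm_ring_1"
  shows "(\<Sum>j<2 * M. f j - (-1) ^ j * f j) = 2 * (\<Sum>k<M. f (Suc (2 * k)))"
  by (induction M) (simp_all add: algebra_simps)

text \<open>Only the odd-indexed terms survive in \<open>\<Sum> (1 - (-1)\<^sup>j) bailey_term j\<close>, and these are the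
  summands of \<open>S1bar\<close> up to the factor \<open>z_factor\<close>.\<close>

lemma z_factor_times_S1bar:
  "z_factor * S1bar = Phi * (suminf bailey_term - suminf (\<lambda>j. (-1) ^ j * bailey_term j)) * inverse 2"
proof (rule fps_eqI_eq_upto)
  fix n
  have two: "2 * inverse (2 :: qz) = 1"
    by (rule inverse_mult_eq_1') simp
  have S1_vanishes: "fps_vanishes_below k (Phi * S1_term k)" for k
  proof -
    have "fps_vanishes_below (Suc (2 * k)) (S1_term k)"
      using fps_vanishes_below_qq_power_mult[of "Suc (2 * k)"
          "qfact_inv (Suc (2 * k)) * negqfact_inv (Suc (2 * k)) * zpoch_q (2 * k)"]
      by (simp add: S1_term_def mult.assoc)
    then show ?thesis
      by (intro fps_vanishes_below_mult_left) (auto intro: fps_vanishes_below_mono)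
  qed
  have "fps_eq_upto n (z_factor * S1bar) (z_factor * (\<Sum>k\<le>n. Phi * S1_term k))"
    unfolding S1bar_eq_suminf by (intro fps_eq_upto_mult fps_eq_upto_refl suminf_fps_eq_upto S1_vanishes) simp
  also have "z_factor * (\<Sum>k\<le>n. Phi * S1_term k) = Phi * (\<Sum>k<Suc n. bailey_term (Suc (2 * k)))"
    by (simp add: sum_distrib_left lessThan_Suc_atMost S1_term_def bailey_term_def zpoch_Suc mult_ac)
  also have "\<dots> = Phi * (2 * (\<Sum>k<Suc n. bailey_term (Suc (2 * k)))) * inverse 2"
  proof -
    have "Phi * (2 * (\<Sum>k<Suc n. bailey_term (Suc (2 * k)))) * inverse 2 =
        Phi * (\<Sum>k<Suc n. bailey_term (Suc (2 * k))) * (2 * inverse 2)"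
      by (simp only: mult_ac)
    then show ?thesis by (simp only: two mult_1_right)
  qed
  also have "\<dots> = Phi * ((\<Sum>j<2 * Suc n. bailey_term j) - (\<Sum>j<2 * Suc n. (-1) ^ j * bailey_term j)) * inverse 2"
    by (simp only: sum_subtractf[symmetric] sum_lessThan_double_alternating)
  also have "fps_eq_upto n \<dots> (Phi * (suminf bailey_term - suminf (\<lambda>j. (-1) ^ j * bailey_term j)) * inverse 2)"
  proof -
    have e: "{..<2 * Suc n} = {..Suc (2 * n)}" by auto
    have "fps_eq_upto n (\<Sum>j\<le>Suc (2 * n). bailey_term j) (suminf bailey_term)"
      by (rule fps_eq_upto_sym, rule suminf_fps_eq_upto[OF bailey_term_vanishes_below]) simp
    moreover have "fps_eq_upto n (\<Sum>j\<le>Suc (2 * n). (-1) ^ j * bailey_term j) (suminf (\<lambda>j. (-1) ^ j * bailey_term j))"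
      by (rule fps_eq_upto_sym, rule suminf_fps_eq_upto)
         (simp_all add: bailey_term_vanishes_below fps_vanishes_below_mult_left)
    ultimately show ?thesis
      unfolding e by (intro fps_eq_upto_mult fps_eq_upto_refl fps_eq_upto_diff)
  qed
  finally show "fps_eq_upto n (z_factor * S1bar)
      (Phi * (suminf bailey_term - suminf (\<lambda>j. (-1) ^ j * bailey_term j)) * inverse 2)" .
qed

lemma gauss_alpha_z_weight_Suc:
  "gauss_alpha (Suc n) * z_weight (Suc n) =
   2 * ((1 - zz) * (1 - zinv) * (-1) ^ (n + 1) * qq ^ (n + 1) / ((1 - zz * qq ^ (n + 1)) * (1 - zinv * qq ^ (n + 1))))"
proof -
  define D where "D = (1 - zz * qq ^ Suc n) * (1 - zinv * qq ^ Suc n)"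
  have D0: "D $ 0 \<noteq> 0" by (simp add: D_def qq_def)
  have "zpoch (Suc n) * zpoch_q_inv (Suc n) = zpoch (Suc n) * zpoch_q_inv (Suc n) * (D * inverse D)"
    using inverse_mult_eq_1'[OF D0] by simp
  also have "\<dots> = (zpoch (Suc n) * zpoch_q_inv (Suc n) * D) * inverse D"
    by (simp only: mult.assoc)
  also have "\<dots> = z_factor * inverse D"
    unfolding D_def zpoch_times_zpoch_q_inv ..
  finally have "zpoch (Suc n) * zpoch_q_inv (Suc n) = z_factor * inverse D" .
  then show ?thesis
    using fps_divide_unit[OF D0] by (simp add: gauss_alpha_def z_weight_def D_def z_factor_def mult_ac)
qed

lemma suminf_gauss_alpha_z_weight:
  "suminf (\<lambda>r. gauss_alpha r * z_weight r) =
   1 + 2 * (\<Sum>n. (1 - zz) * (1 - zinv) * (-1) ^ (n + 1) * qq ^ (n + 1)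
                 / ((1 - zz * qq ^ (n + 1)) * (1 - zinv * qq ^ (n + 1))))"
  (is "_ = 1 + 2 * suminf ?H")
proof (rule fps_eqI_eq_upto)
  fix n
  have H_vanishes: "fps_vanishes_below k (?H k)" for k
  proof -
    have "((1 - zz * qq ^ (k + 1)) * (1 - zinv * qq ^ (k + 1))) $ 0 \<noteq> 0" by (simp add: qq_def)
    then have "?H k = qq ^ k * (qq * (1 - zz) * (1 - zinv) * (-1) ^ (k + 1) *
        inverse ((1 - zz * qq ^ (k + 1)) * (1 - zinv * qq ^ (k + 1))))"
      by (simp add: fps_divide_unit mult_ac)
    then show ?thesis by (simp only: fps_vanishes_below_qq_power_mult)
  qed
  have "fps_eq_upto n (suminf (\<lambda>r. gauss_alpha r * z_weight r)) (\<Sum>r\<le>Suc n. gauss_alpha r * z_weight r)"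
    by (rule suminf_fps_eq_upto) (simp_all add: z_weight_vanishes_below fps_vanishes_below_mult_left)
  also have "(\<Sum>r\<le>Suc n. gauss_alpha r * z_weight r) = 1 + 2 * (\<Sum>k\<le>n. ?H k)"
    unfolding sum.atMost_Suc_shift gauss_alpha_z_weight_Suc
    by (simp add: gauss_alpha_def z_weight_def zpoch_def zpoch_q_inv_def sum_distrib_left)
  also have "fps_eq_upto n \<dots> (1 + 2 * suminf ?H)"
    using fps_eq_upto_sym[OF suminf_fps_eq_upto[OF H_vanishes order.refl]]
    by (intro fps_eq_upto_add fps_eq_upto_mult fps_eq_upto_refl)
  finally show "fps_eq_upto n (suminf (\<lambda>r. gauss_alpha r * z_weight r)) (1 + 2 * suminf ?H)" .
qed

lemma Abs_fps_Nbar_half: "Abs_fps (\<lambda>n. Abs_fls (\<lambda>m. Nbar m n / 2)) = overpart_rank_gf * inverse 2"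
proof -
  have "inverse (2 :: qz) = fps_const (inverse 2)"
    by (simp add: numeral_fps_const fps_const_inverse)
  then have coeff: "(overpart_rank_gf * inverse 2) $ n = overpart_rank_gf $ n * inverse 2" for n
    by (simp only: fps_mult_right_const_nth)
  have half: "inverse (2 :: rat fls) = fls_const (inverse 2)"
    by (metis fls_const_numeral fls_inverse_const)
  have "(\<lambda>m. Nbar m n / 2) = fls_nth (overpart_rank_gf $ n * fls_const (inverse 2))" for n
    by (rule ext) (simp only: Nbar_def fls_mult_const_nth divide_inverse)
  then have "(\<lambda>m. Nbar m n / 2) = fls_nth ((overpart_rank_gf * inverse 2) $ n)" for n
    unfolding coeff half .
  then have "(\<lambda>n. Abs_fls (\<lambda>m. Nbar m n / 2)) = fps_nth (overpart_rank_gf * inverse 2)"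
    by (simp add: fls_nth_inverse)
  then show ?thesis by (simp only: fps_nth_inverse)
qed

theorem theorem2p4:
  shows "(1 - zz) * (1 - zinv) * S1bar =
     Abs_fps (\<lambda>n. Abs_fls (\<lambda>m. Nbar m n / 2))
     - qpoch_inf (- qq) / qpoch_inf qq *
       (1/2 + (\<Sum>n. (1 - zz) * (1 - zinv) * (-1) ^ (n+1) * qq ^ (n+1)
                     / ((1 - zz * qq ^ (n+1)) * (1 - zinv * qq ^ (n+1)))))"
proof -
  have two: "2 * inverse (2 :: qz) = 1"
    by (rule inverse_mult_eq_1') simp
  have quotient: "qpoch_inf (- qq) / qpoch_inf qq = qpoch_inf (- qq) * inverse (qpoch_inf qq)"
    by (rule fps_divide_unit) (simp add: qpoch_inf_nth_0)
  have lambert: "1/2 + (\<Sum>n. (1 - zz) * (1 - zinv) * (-1) ^ (n+1) * qq ^ (n+1)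
                     / ((1 - zz * qq ^ (n+1)) * (1 - zinv * qq ^ (n+1)))) =
      suminf (\<lambda>r. gauss_alpha r * z_weight r) * inverse 2"
    unfolding suminf_gauss_alpha_z_weight using two by (simp add: fps_divide_unit algebra_simps)
  have "(1 - zz) * (1 - zinv) * S1bar =
      Phi * (suminf bailey_term - suminf (\<lambda>j. (-1) ^ j * bailey_term j)) * inverse 2"
    using z_factor_times_S1bar by (simp only: z_factor_def)
  also have "\<dots> = overpart_rank_gf * inverse 2 -
      qpoch_inf (- qq) * inverse (qpoch_inf qq) * (suminf (\<lambda>r. gauss_alpha r * z_weight r) * inverse 2)"
    unfolding right_diff_distrib left_diff_distrib overpart_rank_gf_eq
      Phi_times_suminf_alternating_bailey_term
    by (simp only: mult.assoc)
  also have "\<dots> = Abs_fps (\<lambda>n. Abs_fls (\<lambda>m. Nbar m n / 2))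
     - qpoch_inf (- qq) / qpoch_inf qq *
       (1/2 + (\<Sum>n. (1 - zz) * (1 - zinv) * (-1) ^ (n+1) * qq ^ (n+1)
                     / ((1 - zz * qq ^ (n+1)) * (1 - zinv * qq ^ (n+1)))))"
    unfolding Abs_fps_Nbar_half quotient lambert ..
  finally show ?thesis .
qed

end
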